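(* Let $(A,\mathfrak m)$ and $(B,\mathfrak n)$ be Noetherian local rings and let $f:A\to B$ be a local ring homomorphism satisfying going-down. Then: (a) $\operatorname{cdim}(B)\le\operatorname{cdim}(A)+\operatorname{cdim}(B/\mathfrak mB)$; (b) if $B/\mathfrak mB$ is regular, then $\operatorname{cdim}(B)\le\operatorname{cdim}(A)$.
   Context: For a Noetherian local ring $(R,\mathfrak r)$, $\operatorname{edim}(R)=\dim_{R/\mathfrak r}(\mathfrak r/\mathfrak r^2)$ and $\operatorname{cdim}(R):=\operatorname{edim}(R)-\dim(R)$, with $\dim$ the Krull dimension. $\mathfrak mB=f(\mathfrak m)B$. A ring homomorphism $h:R\to S$ satisfies going-down if for primes $p\subseteq q$ of $R$ and any prime $Q$ of $S$ lying over $q$ there is a prime $P\subseteq Q$ of $S$ lying over $p$. *)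

theory Defs
  imports "HOL-Algebra.Ring_Divisibility" "HOL-Algebra.QuotRing" "HOL-Algebra.Ideal_Product"
    "HOL-Library.Extended_Nat"
begin

definition local_ring :: "('a, 'b) ring_scheme \<Rightarrow> bool" where
  "local_ring R \<longleftrightarrow> cring R \<and> (\<exists>!m. maximalideal m R)"

definition noeth_local_ring :: "('a, 'b) ring_scheme \<Rightarrow> bool" where
  "noeth_local_ring R \<longleftrightarrow> local_ring R \<and> noetherian_ring R"

definition max_ideal :: "('a, 'b) ring_scheme \<Rightarrow> 'a set" where
  "max_ideal R = (THE m. maximalideal m R)"

definition krull_dim :: "('a, 'b) ring_scheme \<Rightarrow> enat" where
  "krull_dim R = Sup {enat n | n. \<exists>P. (\<forall>i\<le>n. primeideal (P i) R) \<and> (\<forall>i<n. P i \<subset> P (Suc i))}"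

(* Embedding dimension dim_{R/m}(m/m^2), written out as the minimal size of a
   (finite) subset S of m whose images span the R/m-vector space m/m^2,
   i.e. such that m is the ideal generated by S together with m^2. *)
definition edim :: "('a, 'b) ring_scheme \<Rightarrow> nat" where
  "edim R = (LEAST n. \<exists>S. finite S \<and> card S = n \<and> S \<subseteq> max_ideal R \<and>
      Idl\<^bsub>R\<^esub> (S \<union> ideal_prod R (max_ideal R) (max_ideal R)) = max_ideal R)"

(* codimension cdim(R) = edim(R) - dim(R) (dim is finite for Noetherian local rings) *)
definition cdim :: "('a, 'b) ring_scheme \<Rightarrow> int" where
  "cdim R = int (edim R) - int (the_enat (krull_dim R))"

definition regular_local_ring :: "('a, 'b) ring_scheme \<Rightarrow> bool" where
  "regular_local_ring R \<longleftrightarrow> noeth_local_ring R \<and> krull_dim R = enat (edim R)"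

definition local_hom :: "('a, 'c) ring_scheme \<Rightarrow> ('b, 'd) ring_scheme \<Rightarrow> ('a \<Rightarrow> 'b) \<Rightarrow> bool" where
  "local_hom A B f \<longleftrightarrow> f \<in> ring_hom A B \<and> f ` max_ideal A \<subseteq> max_ideal B"

definition going_down :: "('a, 'c) ring_scheme \<Rightarrow> ('b, 'd) ring_scheme \<Rightarrow> ('a \<Rightarrow> 'b) \<Rightarrow> bool" where
  "going_down A B f \<longleftrightarrow>
     (\<forall>p q Q. primeideal p A \<and> primeideal q A \<and> p \<subseteq> q \<and> primeideal Q B \<and>
        {a \<in> carrier A. f a \<in> Q} = q \<longrightarrow>
        (\<exists>P. primeideal P B \<and> P \<subseteq> Q \<and> {a \<in> carrier A. f a \<in> P} = p))"

definition ext_ideal :: "('a, 'c) ring_scheme \<Rightarrow> ('b, 'd) ring_scheme \<Rightarrow> ('a \<Rightarrow> 'b) \<Rightarrow> 'a set \<Rightarrow> 'b set" where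
  "ext_ideal A B f I = Idl\<^bsub>B\<^esub> (f ` I)"

end

theory Submission
  imports Defs
begin

text \<open>Write \<open>m\<close> for the maximal ideal of \<open>A\<close> and \<open>F = B/mB\<close> for the closed fibre. A chain of
  primes of \<open>F\<close> pulls back to a chain of primes of \<open>B\<close> containing \<open>mB\<close>, whose bottom contracts
  to \<open>m\<close>; going-down lifts below it any chain of primes of \<open>A\<close>, so \<open>dim A + dim F \<le> dim B\<close>.
  Generators of \<open>m\<close> modulo \<open>m\<^sup>2\<close>, mapped to \<open>B\<close>, together with lifts of generators of the
  maximal ideal of \<open>F\<close> modulo its square, generate the maximal ideal of \<open>B\<close> modulo its square,
  so \<open>edim B \<le> edim A + edim F\<close>. Subtracting gives (a), and (b) is the case \<open>cdim F = 0\<close>.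

  All three dimensions are finite by Krull's height theorem. It is proved without constructing
  localisations: the principal ideal theorem compares symbolic powers using Nakayama's lemma
  and the Artinian property of \<open>R\<^sub>P\<close> modulo a \<open>P\<close>-primary ideal, both phrased for ideals of \<open>R\<close>
  saturated with respect to \<open>R - P\<close>.\<close>

no_notation Sum_Type.Plus (infixr \<open><+>\<close> 65)

section \<open>Sums, products and powers of ideals\<close>

context cring
begin

lemma ideal_cringI:
  assumes "J \<subseteq> carrier R" "\<zero> \<in> J" "\<And>a b. a \<in> J \<Longrightarrow> b \<in> J \<Longrightarrow> a \<oplus> b \<in> J"
    "\<And>a x. a \<in> J \<Longrightarrow> x \<in> carrier R \<Longrightarrow> x \<otimes> a \<in> J"
  shows "ideal J R"
proof (rule idealI[OF ring_axioms])
  have neg: "\<ominus> a \<in> J" if "a \<in> J" for a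
  proof -
    have "\<ominus> a = (\<ominus> \<one>) \<otimes> a" using that assms(1) by (simp add: l_minus subsetD)
    thus ?thesis using assms(4)[OF that] by simp
  qed
  show "subgroup J (add_monoid R)"
    by (rule subgroup.intro) (use assms neg in \<open>auto simp: a_inv_def[symmetric]\<close>)
  show "x \<otimes> a \<in> J" if "a \<in> J" "x \<in> carrier R" for a x using assms(4) that .
  show "a \<otimes> x \<in> J" if "a \<in> J" "x \<in> carrier R" for a x
    using assms(4)[OF that] that assms(1) m_comm by (metis subsetD)
qed

lemma ideal_subset_carrier: "ideal I R \<Longrightarrow> I \<subseteq> carrier R"
  by (simp add: ideal.axioms(1) additive_subgroup.a_subset)

lemma ideal_zero: "ideal I R \<Longrightarrow> \<zero> \<in> I"
  by (simp add: ideal.axioms(1) additive_subgroup.zero_closed)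

lemma ideal_add: "ideal I R \<Longrightarrow> a \<in> I \<Longrightarrow> b \<in> I \<Longrightarrow> a \<oplus> b \<in> I"
  by (simp add: ideal.axioms(1) additive_subgroup.a_closed)

lemma ideal_minus: "ideal I R \<Longrightarrow> a \<in> I \<Longrightarrow> b \<in> I \<Longrightarrow> a \<ominus> b \<in> I"
  by (simp add: a_minus_def ideal_add ideal.axioms(1) additive_subgroup.a_inv_closed)

lemma primeideal_one_notin: "primeideal P R \<Longrightarrow> \<one> \<notin> P"
  using primeideal.I_notcarr ideal.one_imp_carrier primeideal.axioms(1) by fastforce

lemma primeideal_mult_notin:
  "primeideal P R \<Longrightarrow> s \<in> carrier R \<Longrightarrow> t \<in> carrier R \<Longrightarrow> s \<notin> P \<Longrightarrow> t \<notin> P \<Longrightarrow> s \<otimes> t \<notin> P"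
  by (metis primeideal.I_prime)

lemma primeideal_nat_pow_memD:
  assumes P: "primeideal P R" and y: "y \<in> carrier R" and "y [^] (n::nat) \<in> P"
  shows "y \<in> P"
  using assms(3)
proof (induct n)
  case 0 thus ?case using primeideal_one_notin[OF P] by simp
next
  case (Suc n)
  hence "y [^] n \<in> P \<or> y \<in> P" using primeideal.I_prime[OF P] y by simp
  thus ?case using Suc(1) by blast
qed

lemma set_add_mem_iff: "x \<in> I <+> J \<longleftrightarrow> (\<exists>i\<in>I. \<exists>j\<in>J. x = i \<oplus> j)"
  unfolding set_add_def' by blast

lemma set_add_memI: "i \<in> I \<Longrightarrow> j \<in> J \<Longrightarrow> i \<oplus> j \<in> I <+> J"
  unfolding set_add_mem_iff by blast

lemma set_add_least: "ideal K R \<Longrightarrow> I \<subseteq> K \<Longrightarrow> J \<subseteq> K \<Longrightarrow> I <+> J \<subseteq> K"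
  unfolding set_add_def' by (auto intro: ideal_add)

lemma set_add_upper1: "ideal I R \<Longrightarrow> ideal J R \<Longrightarrow> I \<subseteq> I <+> J"
  using union_genideal genideal_self[of "I \<union> J"] ideal_subset_carrier by blast

lemma set_add_upper2: "ideal I R \<Longrightarrow> ideal J R \<Longrightarrow> J \<subseteq> I <+> J"
  using union_genideal genideal_self[of "I \<union> J"] ideal_subset_carrier by blast

lemma set_add_mono: "I \<subseteq> I' \<Longrightarrow> J \<subseteq> J' \<Longrightarrow> I <+> J \<subseteq> I' <+> J'"
  unfolding set_add_def' by blast

lemma PIdl_memI: "x \<in> carrier R \<Longrightarrow> x \<otimes> g \<in> PIdl g"
  unfolding cgenideal_def by blast

lemma PIdl_memE: "y \<in> PIdl g \<Longrightarrow> (\<And>x. x \<in> carrier R \<Longrightarrow> y = x \<otimes> g \<Longrightarrow> thesis) \<Longrightarrow> thesis"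
  unfolding cgenideal_def by blast

lemma set_add_PIdl_mem_iff: "x \<in> I <+> PIdl a \<longleftrightarrow> (\<exists>i\<in>I. \<exists>r\<in>carrier R. x = i \<oplus> r \<otimes> a)"
  unfolding set_add_mem_iff cgenideal_def by auto

lemma ideal_prod_least:
  assumes K: "ideal K R" and "\<And>i j. i \<in> I \<Longrightarrow> j \<in> J \<Longrightarrow> i \<otimes> j \<in> K"
  shows "I \<cdot> J \<subseteq> K"
proof
  fix x assume "x \<in> I \<cdot> J"
  thus "x \<in> K" by (induct x rule: ideal_prod.induct) (auto intro: assms(2) ideal_add[OF K])
qed

lemma ideal_prod_mono:
  assumes "ideal I' R" "ideal J' R" "I \<subseteq> I'" "J \<subseteq> J'"
  shows "I \<cdot> J \<subseteq> I' \<cdot> J'"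
  by (rule ideal_prod_least[OF ideal_prod_is_ideal[OF assms(1,2)]])
    (use assms(3,4) in \<open>auto intro: ideal_prod.prod\<close>)

lemma genideal_empty: "Idl {} = {\<zero>}"
  using genideal_minimal[OF zeroideal, of "{}"] ideal_zero[OF genideal_ideal[of "{}"]] by auto

lemma genideal_insert_subset:
  assumes "g \<in> carrier R" "G \<subseteq> carrier R"
  shows "Idl (insert g G) \<subseteq> Idl G <+> PIdl g"
proof (rule genideal_minimal[OF add_ideals[OF genideal_ideal[OF assms(2)] cgenideal_ideal[OF assms(1)]]])
  show "insert g G \<subseteq> Idl G <+> PIdl g"
    using set_add_upper1[OF genideal_ideal[OF assms(2)] cgenideal_ideal[OF assms(1)]]
      set_add_upper2[OF genideal_ideal[OF assms(2)] cgenideal_ideal[OF assms(1)]]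
      genideal_self[OF assms(2)] cgenideal_self[OF assms(1)] by blast
qed

end

primrec ideal_pow :: "('a, 'b) ring_scheme \<Rightarrow> 'a set \<Rightarrow> nat \<Rightarrow> 'a set" where
  "ideal_pow R I 0 = carrier R"
| "ideal_pow R I (Suc n) = ideal_prod R I (ideal_pow R I n)"

context cring
begin

lemma ideal_pow_ideal: "ideal I R \<Longrightarrow> ideal (ideal_pow R I n) R"
  by (induct n) (simp_all add: oneideal ideal_prod_is_ideal)

lemma ideal_pow_Suc_subset: "ideal I R \<Longrightarrow> ideal_pow R I (Suc n) \<subseteq> ideal_pow R I n"
  using ideal_prod_inter[OF _ ideal_pow_ideal] by simp

lemma ideal_pow_mono:
  assumes I': "ideal I' R" and "I \<subseteq> I'"
  shows "ideal_pow R I n \<subseteq> ideal_pow R I' n"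
  by (induct n) (simp_all add: ideal_prod_mono[OF I' ideal_pow_ideal[OF I'] assms(2)])

lemma primeideal_ideal_pow_subsetD:
  assumes Q: "primeideal Q R" and I: "ideal I R" and "ideal_pow R I n \<subseteq> Q"
  shows "I \<subseteq> Q"
  using assms(3)
proof (induct n)
  case 0 thus ?case
    using primeideal.I_notcarr[OF Q] ideal_subset_carrier[OF primeideal.axioms(1)[OF Q]] by auto
next
  case (Suc n)
  hence "I \<subseteq> Q \<or> ideal_pow R I n \<subseteq> Q"
    using primeideal_divides_ideal_prod[OF Q I ideal_pow_ideal[OF I]] by simp
  thus ?case using Suc(1) by blast
qed

lemma ideal_pow_PIdl_subset:
  assumes g: "g \<in> carrier R"
  shows "ideal_pow R (PIdl g) n \<subseteq> PIdl (g [^] (n::nat))"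
proof (induct n)
  case 0 show ?case using PIdl_memI[of _ \<one>] by fastforce
next
  case (Suc n)
  have "(PIdl g) \<cdot> ideal_pow R (PIdl g) n \<subseteq> PIdl (g [^] Suc n)"
  proof (rule ideal_prod_least[OF cgenideal_ideal])
    show "g [^] Suc n \<in> carrier R" using g by simp
    fix i j assume i: "i \<in> PIdl g" and j: "j \<in> ideal_pow R (PIdl g) n"
    obtain x where x: "x \<in> carrier R" "i = x \<otimes> g" using i by (rule PIdl_memE)
    obtain y where y: "y \<in> carrier R" "j = y \<otimes> g [^] n" using Suc j by (meson PIdl_memE subsetD)
    have "i \<otimes> j = (x \<otimes> y) \<otimes> g [^] Suc n" using x y g by (simp add: nat_pow_Suc2 m_ac)
    thus "i \<otimes> j \<in> PIdl (g [^] Suc n)" using PIdl_memI x y by simp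
  qed
  thus ?case by simp
qed

lemma ideal_pow_set_add_subset:
  assumes A: "ideal A R" and B: "ideal B R"
  shows "ideal_pow R (A <+> B) (a + b) \<subseteq> ideal_pow R A a <+> ideal_pow R B b"
proof -
  have "ideal_pow R (A <+> B) c \<subseteq> ideal_pow R A a <+> ideal_pow R B b" if "a + b = c" for a b c
    using that
  proof (induct c arbitrary: a b)
    case 0
    thus ?case using set_add_upper1[OF oneideal oneideal] by simp
  next
    case (Suc c)
    have Aa: "ideal (ideal_pow R A a) R" and Bb: "ideal (ideal_pow R B b) R"
      and X: "ideal (ideal_pow R (A <+> B) c) R"
      using ideal_pow_ideal A B add_ideals[OF A B] by auto
    show ?case
    proof (cases "a = 0 \<or> b = 0")
      case True
      hence "carrier R \<subseteq> ideal_pow R A a <+> ideal_pow R B b"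
        using set_add_upper1[OF oneideal Bb] set_add_upper2[OF Aa oneideal] by force
      thus ?thesis using ideal_subset_carrier[OF ideal_pow_ideal[OF add_ideals[OF A B]]] by blast
    next
      case False
      then obtain a' b' where ab: "a = Suc a'" "b = Suc b'" by (meson not0_implies_Suc)
      have Aa': "ideal (ideal_pow R A a') R" and Bb': "ideal (ideal_pow R B b') R"
        using ideal_pow_ideal A B by auto
      have "A \<cdot> ideal_pow R (A <+> B) c \<subseteq> A \<cdot> (ideal_pow R A a' <+> ideal_pow R B b)"
        by (rule ideal_prod_mono[OF A add_ideals[OF Aa' Bb] subset_refl], rule Suc.hyps) (use Suc.prems ab in simp)
      also have "\<dots> \<subseteq> ideal_pow R A a <+> ideal_pow R B b"
        unfolding ideal_prod_distr(1)[OF A Aa' Bb] ab(1) ideal_pow.simps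
        by (rule set_add_mono[OF subset_refl]) (use ideal_prod_inter[OF A Bb] ab(2) in simp)
      finally have AX: "A \<cdot> ideal_pow R (A <+> B) c \<subseteq> ideal_pow R A a <+> ideal_pow R B b" .
      have "B \<cdot> ideal_pow R (A <+> B) c \<subseteq> B \<cdot> (ideal_pow R A a <+> ideal_pow R B b')"
        by (rule ideal_prod_mono[OF B add_ideals[OF Aa Bb'] subset_refl], rule Suc.hyps) (use Suc.prems ab in simp)
      also have "\<dots> \<subseteq> ideal_pow R A a <+> ideal_pow R B b"
        unfolding ideal_prod_distr(1)[OF B Aa Bb'] ab(2) ideal_pow.simps
        by (rule set_add_mono[OF _ subset_refl]) (use ideal_prod_inter[OF B Aa] in blast)
      finally have BX: "B \<cdot> ideal_pow R (A <+> B) c \<subseteq> ideal_pow R A a <+> ideal_pow R B b" .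
      show ?thesis unfolding ideal_pow.simps ideal_prod_distr(2)[OF X A B]
        by (rule set_add_least[OF add_ideals[OF Aa Bb] AX BX])
    qed
  qed
  thus ?thesis by blast
qed

lemma ideal_pow_genideal_subset:
  assumes "finite G" "G \<subseteq> carrier R" and K: "ideal K R"
    and "\<And>g. g \<in> G \<Longrightarrow> \<exists>n::nat. g [^] n \<in> K"
  shows "\<exists>k. ideal_pow R (Idl G) k \<subseteq> K"
  using assms(1,2,4)
proof (induct G rule: finite_induct)
  case empty
  have "ideal_pow R (Idl {}) 1 = {\<zero>}" using ideal_prod_one[OF zeroideal] by (simp add: genideal_empty)
  thus ?case using ideal_zero[OF K] by (intro exI[of _ 1]) simp
next
  case (insert g G)
  have g: "g \<in> carrier R" and G: "G \<subseteq> carrier R" using insert by auto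
  obtain a where a: "ideal_pow R (Idl G) a \<subseteq> K" using insert by auto
  obtain b where b: "g [^] (b::nat) \<in> K" using insert(5) by blast
  have "ideal_pow R (Idl (insert g G)) (a + b) \<subseteq> ideal_pow R (Idl G <+> PIdl g) (a + b)"
    by (rule ideal_pow_mono[OF add_ideals[OF genideal_ideal[OF G] cgenideal_ideal[OF g]]
          genideal_insert_subset[OF g G]])
  also have "\<dots> \<subseteq> ideal_pow R (Idl G) a <+> ideal_pow R (PIdl g) b"
    by (rule ideal_pow_set_add_subset[OF genideal_ideal[OF G] cgenideal_ideal[OF g]])
  also have "\<dots> \<subseteq> K"
  proof (rule set_add_least[OF K a])
    have "PIdl (g [^] b) \<subseteq> K" using b K unfolding cgenideal_def by (auto intro: ideal.I_l_closed)
    thus "ideal_pow R (PIdl g) b \<subseteq> K" using ideal_pow_PIdl_subset[OF g, of b] by blast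
  qed
  finally show ?case by blast
qed

end

section \<open>Saturation at a prime ideal\<close>

text \<open>\<open>saturation R P J\<close> is the contraction to \<open>R\<close> of the extension \<open>J R\<^sub>P\<close> of \<open>J\<close> to the
  localisation at \<open>P\<close>. Arguments in \<open>R\<^sub>P\<close> are carried out on such \<open>P\<close>-saturated ideals of \<open>R\<close>.\<close>

definition saturation :: "('a, 'b) ring_scheme \<Rightarrow> 'a set \<Rightarrow> 'a set \<Rightarrow> 'a set" where
  "saturation R P J = {r \<in> carrier R. \<exists>s \<in> carrier R - P. s \<otimes>\<^bsub>R\<^esub> r \<in> J}"

definition saturated :: "('a, 'b) ring_scheme \<Rightarrow> 'a set \<Rightarrow> 'a set \<Rightarrow> bool" where
  "saturated R P J \<longleftrightarrow> ideal J R \<and> saturation R P J = J"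

context cring
begin

lemma saturationI:
  "s \<in> carrier R \<Longrightarrow> s \<notin> P \<Longrightarrow> r \<in> carrier R \<Longrightarrow> s \<otimes> r \<in> J \<Longrightarrow> r \<in> saturation R P J"
  unfolding saturation_def by blast

lemma saturationE:
  assumes "r \<in> saturation R P J"
  obtains s where "s \<in> carrier R" "s \<notin> P" "s \<otimes> r \<in> J" "r \<in> carrier R"
  using assms unfolding saturation_def by blast

lemma saturation_ideal:
  assumes P: "primeideal P R" and J: "ideal J R"
  shows "ideal (saturation R P J) R"
proof (rule ideal_cringI)
  show "saturation R P J \<subseteq> carrier R" unfolding saturation_def by auto
  show "\<zero> \<in> saturation R P J"
    by (rule saturationI[of \<one>]) (simp_all add: primeideal_one_notin[OF P] ideal_zero[OF J])
  show "a \<oplus> b \<in> saturation R P J" if ha: "a \<in> saturation R P J" and hb: "b \<in> saturation R P J" for a b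
  proof -
    obtain s where s: "s \<in> carrier R" "s \<notin> P" "s \<otimes> a \<in> J" and a: "a \<in> carrier R"
      using ha by (rule saturationE)
    obtain t where t: "t \<in> carrier R" "t \<notin> P" "t \<otimes> b \<in> J" and b: "b \<in> carrier R"
      using hb by (rule saturationE)
    have "(t \<otimes> s) \<otimes> (a \<oplus> b) = t \<otimes> (s \<otimes> a) \<oplus> s \<otimes> (t \<otimes> b)"
      using s t a b by algebra
    also have "\<dots> \<in> J"
      using ideal_add[OF J ideal.I_l_closed[OF J s(3) t(1)] ideal.I_l_closed[OF J t(3) s(1)]] .
    finally show ?thesis using primeideal_mult_notin[OF P t(1) s(1) t(2) s(2)] s t a b
      by (intro saturationI[of "t \<otimes> s"]) simp_all
  qed
  show "x \<otimes> a \<in> saturation R P J" if ha: "a \<in> saturation R P J" and x: "x \<in> carrier R" for a x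
  proof -
    obtain s where s: "s \<in> carrier R" "s \<notin> P" "s \<otimes> a \<in> J" and a: "a \<in> carrier R"
      using ha by (rule saturationE)
    have "s \<otimes> (x \<otimes> a) = x \<otimes> (s \<otimes> a)" using s a x by algebra
    also have "\<dots> \<in> J" using ideal.I_l_closed[OF J s(3) x] .
    finally show ?thesis using s a x by (intro saturationI[of s]) simp_all
  qed
qed

lemma saturation_upper:
  assumes "primeideal P R" and "J \<subseteq> carrier R"
  shows "J \<subseteq> saturation R P J"
  using assms primeideal_one_notin[OF assms(1)] by (auto intro!: saturationI[of \<one>])

lemma saturation_mono: "J \<subseteq> J' \<Longrightarrow> saturation R P J \<subseteq> saturation R P J'"
  unfolding saturation_def by blast

lemma saturation_antimono: "Q \<subseteq> P \<Longrightarrow> saturation R P J \<subseteq> saturation R Q J"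
  unfolding saturation_def by blast

lemma saturation_idem:
  assumes P: "primeideal P R"
  shows "saturation R P (saturation R P J) = saturation R P J"
proof
  show "saturation R P J \<subseteq> saturation R P (saturation R P J)"
    by (rule saturation_upper[OF P]) (auto simp: saturation_def)
  show "saturation R P (saturation R P J) \<subseteq> saturation R P J"
  proof
    fix r assume "r \<in> saturation R P (saturation R P J)"
    then obtain s where s: "s \<in> carrier R" "s \<notin> P" "s \<otimes> r \<in> saturation R P J"
      and r: "r \<in> carrier R" by (rule saturationE)
    obtain t where t: "t \<in> carrier R" "t \<notin> P" "t \<otimes> (s \<otimes> r) \<in> J"
      using s(3) by (rule saturationE)
    have "(t \<otimes> s) \<otimes> r = t \<otimes> (s \<otimes> r)" using s t r by algebra
    thus "r \<in> saturation R P J" using primeideal_mult_notin[OF P t(1) s(1) t(2) s(2)] s t r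
      by (intro saturationI[of "t \<otimes> s"]) simp_all
  qed
qed

lemma saturation_cancel:
  assumes "primeideal P R" "x \<in> carrier R" "x \<notin> P" "a \<in> carrier R"
    and "x \<otimes> a \<in> saturation R P J"
  shows "a \<in> saturation R P J"
  using saturationI[OF assms(2-5)] saturation_idem[OF assms(1)] by simp

lemma saturation_primeideal:
  assumes P: "primeideal P R" and Q: "primeideal Q R" and "Q \<subseteq> P"
  shows "saturation R P Q = Q"
proof
  show "Q \<subseteq> saturation R P Q"
    by (rule saturation_upper[OF P ideal_subset_carrier[OF primeideal.axioms(1)[OF Q]]])
  show "saturation R P Q \<subseteq> Q"
    unfolding saturation_def using primeideal.I_prime[OF Q] assms(3) by blast
qed

lemma saturated_saturation: "primeideal P R \<Longrightarrow> ideal J R \<Longrightarrow> saturated R P (saturation R P J)"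
  unfolding saturated_def using saturation_ideal saturation_idem by blast

lemma saturated_Int:
  assumes P: "primeideal P R" and "saturated R P A" "saturated R P B"
  shows "saturated R P (A \<inter> B)"
proof -
  have i: "ideal (A \<inter> B) R" using assms i_intersect unfolding saturated_def by blast
  have "saturation R P (A \<inter> B) \<subseteq> A \<inter> B"
    using saturation_mono[of "A \<inter> B" A P] saturation_mono[of "A \<inter> B" B P] assms(2,3)
    unfolding saturated_def by blast
  thus ?thesis using i saturation_upper[OF P ideal_subset_carrier[OF i]] unfolding saturated_def by blast
qed

lemma saturation_upper_set_add:
  assumes "primeideal P R" "ideal I R" "ideal J R"
  shows "I \<subseteq> saturation R P (I <+> J)" "J \<subseteq> saturation R P (I <+> J)"
  using set_add_upper1[OF assms(2,3)] set_add_upper2[OF assms(2,3)]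
    saturation_upper[OF assms(1) ideal_subset_carrier[OF add_ideals[OF assms(2,3)]]] by blast+

end

section \<open>Maximal and minimal prime ideals\<close>

lemma (in noetherian_ring) exists_maximal_element:
  assumes "S \<noteq> {}" "\<And>I. I \<in> S \<Longrightarrow> ideal I R"
  shows "\<exists>M\<in>S. \<forall>X\<in>S. M \<subseteq> X \<longrightarrow> X = M"
proof (rule Zorn_Lemma2, intro ballI)
  fix C assume C: "C \<in> chains S"
  show "\<exists>U\<in>S. \<forall>X\<in>C. X \<subseteq> U"
  proof (cases "C = {}")
    case True then show ?thesis using assms(1) by blast
  next
    case False
    have "subset.chain {I. ideal I R} C"
      using C assms(2) unfolding chains_alt_def subset_chain_def by auto
    then have "\<Union>C \<in> C" using ideal_chain_is_trivial False by blast
    then show ?thesis using C unfolding chains_def by auto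
  qed
qed

lemma (in cring) maximal_disjoint_ideal_is_prime:
  assumes M: "ideal M R" and S: "S \<subseteq> carrier R" "\<one> \<in> S" "\<And>a b. a \<in> S \<Longrightarrow> b \<in> S \<Longrightarrow> a \<otimes> b \<in> S"
    and disj: "M \<inter> S = {}"
    and max: "\<And>J. ideal J R \<Longrightarrow> M \<subseteq> J \<Longrightarrow> J \<inter> S = {} \<Longrightarrow> J = M"
  shows "primeideal M R"
proof (rule primeidealI[OF M is_cring])
  show "carrier R \<noteq> M" using S(2) disj by blast
  have meet: "\<exists>m\<in>M. \<exists>r\<in>carrier R. m \<oplus> r \<otimes> a \<in> S" if a: "a \<in> carrier R" "a \<notin> M" for a
  proof (rule ccontr)
    assume "\<not> ?thesis"
    hence "(M <+> PIdl a) \<inter> S = {}" by (auto simp: set_add_PIdl_mem_iff)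
    hence "M <+> PIdl a = M"
      using max[OF add_ideals[OF M cgenideal_ideal[OF a(1)]] set_add_upper1[OF M cgenideal_ideal[OF a(1)]]]
      by blast
    thus False using set_add_upper2[OF M cgenideal_ideal[OF a(1)]] cgenideal_self[OF a(1)] a(2) by blast
  qed
  fix a b assume ab: "a \<in> carrier R" "b \<in> carrier R" "a \<otimes> b \<in> M"
  show "a \<in> M \<or> b \<in> M"
  proof (rule ccontr)
    assume "\<not> (a \<in> M \<or> b \<in> M)"
    then obtain m r m' r' where mr: "m \<in> M" "r \<in> carrier R" "m \<oplus> r \<otimes> a \<in> S"
      and mr': "m' \<in> M" "r' \<in> carrier R" "m' \<oplus> r' \<otimes> b \<in> S"
      using meet ab by meson
    have c: "m \<in> carrier R" "m' \<in> carrier R" using mr mr' ideal_subset_carrier[OF M] by auto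
    have eq: "(m \<oplus> r \<otimes> a) \<otimes> (m' \<oplus> r' \<otimes> b) = m \<otimes> (m' \<oplus> r' \<otimes> b) \<oplus> (r \<otimes> a) \<otimes> m' \<oplus> (r \<otimes> r') \<otimes> (a \<otimes> b)"
      using c ab mr mr' by algebra
    have "m \<otimes> (m' \<oplus> r' \<otimes> b) \<in> M" using ideal.I_r_closed[OF M mr(1)] c ab mr' by simp
    moreover have "(r \<otimes> a) \<otimes> m' \<in> M" using ideal.I_l_closed[OF M mr'(1)] ab mr by simp
    moreover have "(r \<otimes> r') \<otimes> (a \<otimes> b) \<in> M" using ideal.I_l_closed[OF M ab(3)] mr mr' by simp
    ultimately have "(m \<oplus> r \<otimes> a) \<otimes> (m' \<oplus> r' \<otimes> b) \<in> M" unfolding eq by (simp add: ideal_add[OF M])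
    moreover have "(m \<oplus> r \<otimes> a) \<otimes> (m' \<oplus> r' \<otimes> b) \<in> S" using S(3) mr(3) mr'(3) .
    ultimately show False using disj by blast
  qed
qed

definition minimal_prime_over :: "('a, 'b) ring_scheme \<Rightarrow> 'a set \<Rightarrow> 'a set \<Rightarrow> bool" where
  "minimal_prime_over R J P \<longleftrightarrow> primeideal P R \<and> J \<subseteq> P \<and>
     (\<forall>P'. primeideal P' R \<longrightarrow> J \<subseteq> P' \<longrightarrow> P' \<subseteq> P \<longrightarrow> P' = P)"

lemma (in cring) minimal_prime_over_if_nat_pow_in_saturation:
  assumes min: "minimal_prime_over R (Idl X) P" and X: "X \<subseteq> carrier R" and K: "K \<subseteq> P"
    and pow: "\<And>y. y \<in> X \<Longrightarrow> \<exists>n::nat. y [^] n \<in> saturation R P K"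
  shows "minimal_prime_over R K P"
  unfolding minimal_prime_over_def
proof (intro conjI allI impI)
  show P: "primeideal P R" "K \<subseteq> P" using min K unfolding minimal_prime_over_def by auto
  fix P' assume P': "primeideal P' R" "K \<subseteq> P'" "P' \<subseteq> P"
  have "y \<in> P'" if y: "y \<in> X" for y
  proof -
    obtain n :: nat and s where s: "s \<in> carrier R" "s \<notin> P" "s \<otimes> y [^] n \<in> K"
      using pow[OF y] by (blast elim: saturationE)
    have yc: "y \<in> carrier R" using y X by blast
    have "s \<notin> P'" using s(2) P'(3) by blast
    hence "y [^] n \<in> P'" using primeideal.I_prime[OF P'(1) s(1), of "y [^] n"] s(3) P'(2) yc by auto
    thus "y \<in> P'" using primeideal_nat_pow_memD[OF P'(1) yc] by blast
  qed
  hence "Idl X \<subseteq> P'" using genideal_minimal[OF primeideal.axioms(1)[OF P'(1)]] by blast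
  thus "P' = P" using min P'(1,3) unfolding minimal_prime_over_def by blast
qed

locale noetherian_cring = noetherian_ring + cring

context noetherian_cring
begin

lemma exists_maximalideal_superset:
  assumes "ideal I R" and "I \<noteq> carrier R"
  obtains M where "maximalideal M R" "I \<subseteq> M"
proof -
  define F where "F = {K. ideal K R \<and> I \<subseteq> K \<and> K \<noteq> carrier R}"
  have "F \<noteq> {}" "\<And>K. K \<in> F \<Longrightarrow> ideal K R" using assms unfolding F_def by blast+
  then obtain M where M: "M \<in> F" and Mmax: "\<forall>X\<in>F. M \<subseteq> X \<longrightarrow> X = M"
    using exists_maximal_element by meson
  have "maximalideal M R"
  proof (rule maximalidealI)
    show "ideal M R" "carrier R \<noteq> M" using M unfolding F_def by auto
    fix K assume "ideal K R" "M \<subseteq> K" "K \<subseteq> carrier R"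
    thus "K = M \<or> K = carrier R" using M Mmax unfolding F_def by blast
  qed
  thus thesis using M that unfolding F_def by blast
qed

text \<open>This says that \<open>P R\<^sub>P\<close> is the radical of \<open>J R\<^sub>P\<close>: the set \<open>S\<close> below is the multiplicative
  set generated by \<open>y\<close> and \<open>R - P\<close>, and an ideal maximal among those avoiding it is a prime
  between \<open>J\<close> and \<open>P\<close> missing \<open>y\<close>.\<close>

lemma minimal_prime_over_nat_pow_in_saturation:
  assumes min: "minimal_prime_over R J P" and J: "ideal J R" and y: "y \<in> P"
  shows "\<exists>n::nat. y [^] n \<in> saturation R P J"
proof (rule ccontr)
  assume neg: "\<not> ?thesis"
  have P: "primeideal P R" and JP: "J \<subseteq> P" using min unfolding minimal_prime_over_def by auto
  have yc: "y \<in> carrier R" using y ideal_subset_carrier[OF primeideal.axioms(1)[OF P]] by auto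
  define S where "S = {s \<otimes> y [^] (n::nat) | s n. s \<in> carrier R \<and> s \<notin> P}"
  have Sc: "S \<subseteq> carrier R" unfolding S_def using yc by auto
  have S1: "\<one> \<in> S" unfolding S_def using primeideal_one_notin[OF P]
    by (auto intro!: exI[of _ \<one>] exI[of _ "0::nat"])
  have Smult: "a \<otimes> b \<in> S" if a: "a \<in> S" and b: "b \<in> S" for a b
  proof -
    obtain s n where sn: "a = s \<otimes> y [^] (n::nat)" "s \<in> carrier R" "s \<notin> P"
      using a unfolding S_def by blast
    obtain t k where tk: "b = t \<otimes> y [^] (k::nat)" "t \<in> carrier R" "t \<notin> P"
      using b unfolding S_def by blast
    have "a \<otimes> b = (s \<otimes> t) \<otimes> y [^] (n + k)" using sn tk yc
      by (simp add: nat_pow_mult m_ac add.commute)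
    thus ?thesis using primeideal_mult_notin[OF P sn(2) tk(2) sn(3) tk(3)] sn tk
      unfolding S_def by blast
  qed
  have False if "s \<in> carrier R" "s \<notin> P" "s \<otimes> y [^] (n::nat) \<in> J" for s n
    using neg saturationI[OF that(1,2) _ that(3)] yc by simp
  hence JS: "J \<inter> S = {}" unfolding S_def by blast
  define F where "F = {I. ideal I R \<and> J \<subseteq> I \<and> I \<inter> S = {}}"
  have "F \<noteq> {}" "\<And>I. I \<in> F \<Longrightarrow> ideal I R" using J JS unfolding F_def by blast+
  then obtain M where M: "M \<in> F" and Mmax: "\<forall>X\<in>F. M \<subseteq> X \<longrightarrow> X = M"
    using exists_maximal_element by meson
  have Mi: "ideal M R" "J \<subseteq> M" "M \<inter> S = {}" using M unfolding F_def by auto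
  have Mp: "primeideal M R"
    by (rule maximal_disjoint_ideal_is_prime[OF Mi(1) Sc S1 Smult Mi(3)])
      (use Mi(2) Mmax in \<open>auto simp: F_def\<close>)
  have MP: "M \<subseteq> P"
  proof
    fix x assume x: "x \<in> M"
    have xc: "x \<in> carrier R" using x ideal_subset_carrier[OF Mi(1)] by blast
    show "x \<in> P"
    proof (rule ccontr)
      assume "x \<notin> P"
      hence "x \<otimes> y [^] (0::nat) \<in> S" unfolding S_def using xc by blast
      thus False using x xc Mi(3) by auto
    qed
  qed
  have "\<one> \<otimes> y [^] (1::nat) \<in> S" unfolding S_def using primeideal_one_notin[OF P] by blast
  hence "y \<notin> M" using yc Mi(3) by auto
  thus False using min Mp Mi(2) MP y unfolding minimal_prime_over_def by blast
qed

lemma minimal_prime_over_ideal_pow_subset: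
  assumes min: "minimal_prime_over R J P" and J: "ideal J R"
  shows "\<exists>k. ideal_pow R P k \<subseteq> saturation R P J"
proof -
  have P: "primeideal P R" using min unfolding minimal_prime_over_def by blast
  obtain G where G: "G \<subseteq> carrier R" "finite G" "P = Idl G"
    using finetely_gen[OF primeideal.axioms(1)[OF P]] by blast
  have "G \<subseteq> P" using genideal_self[OF G(1)] G(3) by simp
  hence "\<exists>k. ideal_pow R (Idl G) k \<subseteq> saturation R P J"
    using ideal_pow_genideal_subset[OF G(2,1) saturation_ideal[OF P J]]
      minimal_prime_over_nat_pow_in_saturation[OF min J] by blast
  thus ?thesis using G(3) by simp
qed

end

section \<open>Nakayama's lemma and the Artinian property in \<open>R\<^sub>P\<close>\<close>

context cring
begin

lemma ideal_prod_PIdl_memE: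
  assumes J: "ideal J R" and g: "g \<in> carrier R" and "x \<in> J \<cdot> (PIdl g)"
  obtains c where "c \<in> J" "x = c \<otimes> g"
proof -
  from assms(3) have "\<exists>c\<in>J. x = c \<otimes> g"
  proof (induct x rule: ideal_prod.induct)
    case (prod j y)
    obtain r where r: "r \<in> carrier R" "y = r \<otimes> g" using prod(2) by (rule PIdl_memE)
    have "j \<otimes> y = (j \<otimes> r) \<otimes> g" using r g ideal.Icarr[OF J prod(1)] by (simp add: m_assoc)
    thus ?case using ideal.I_r_closed[OF J prod(1) r(1)] by blast
  next
    case (sum s1 s2)
    then obtain c1 c2 where "c1 \<in> J" "s1 = c1 \<otimes> g" "c2 \<in> J" "s2 = c2 \<otimes> g" by blast
    thus ?case using ideal_add[OF J] ideal.Icarr[OF J] g by (metis l_distr)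
  qed
  thus thesis using that by blast
qed

lemma ideal_prod_saturation_subset:
  assumes P: "primeideal P R" and J: "ideal J R" and K: "ideal K R"
  shows "J \<cdot> saturation R P K \<subseteq> saturation R P (J \<cdot> K)"
proof (rule ideal_prod_least[OF saturation_ideal[OF P ideal_prod_is_ideal[OF J K]]])
  fix j x assume j: "j \<in> J" and x_sat: "x \<in> saturation R P K"
  obtain s where s: "s \<in> carrier R" "s \<notin> P" "s \<otimes> x \<in> K" and x: "x \<in> carrier R"
    using x_sat by (rule saturationE)
  have "s \<otimes> (j \<otimes> x) = j \<otimes> (s \<otimes> x)" using s x ideal.Icarr[OF J j] by algebra
  thus "j \<otimes> x \<in> saturation R P (J \<cdot> K)"
    using ideal_prod.prod[OF j s(3)] s x ideal.Icarr[OF J j] by (intro saturationI[of s]) simp_all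
qed

text \<open>The determinant trick for a single generator: \<open>t g = l + c g\<close> with \<open>c \<in> P\<close> gives
  \<open>(t - c) g \<in> L\<close> with \<open>t - c\<close> a unit of \<open>R\<^sub>P\<close>.\<close>

lemma saturation_absorb_ideal_prod_PIdl:
  assumes P: "primeideal P R" and L: "ideal L R" and J: "ideal J R" "J \<subseteq> P" and g: "g \<in> carrier R"
    and "g \<in> saturation R P (L <+> J \<cdot> (PIdl g))"
  shows "g \<in> saturation R P L"
proof -
  obtain t where t: "t \<in> carrier R" "t \<notin> P" "t \<otimes> g \<in> L <+> J \<cdot> (PIdl g)"
    using assms(6) by (rule saturationE)
  obtain l z where lz: "l \<in> L" "z \<in> J \<cdot> (PIdl g)" "t \<otimes> g = l \<oplus> z"
    using t(3) set_add_mem_iff by metis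
  obtain c where c: "c \<in> J" "z = c \<otimes> g" using ideal_prod_PIdl_memE[OF J(1) g lz(2)] .
  have cc: "c \<in> carrier R" "l \<in> carrier R" using ideal.Icarr[OF J(1) c(1)] ideal.Icarr[OF L lz(1)] by auto
  have "(t \<ominus> c) \<otimes> g = l" using lz(3) c(2) cc t(1) g by algebra
  moreover have "t \<ominus> c \<notin> P"
  proof
    assume "t \<ominus> c \<in> P"
    hence "(t \<ominus> c) \<oplus> c \<in> P" using c(1) J(2) ideal_add[OF primeideal.axioms(1)[OF P]] by blast
    moreover have "(t \<ominus> c) \<oplus> c = t" using t(1) cc by algebra
    ultimately show False using t(2) by simp
  qed
  ultimately show ?thesis using saturationI[of "t \<ominus> c" P g L] t(1) cc g lz(1) by simp
qed

lemma saturation_absorb_PIdl: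
  assumes P: "primeideal P R" and L: "ideal L R" and J: "ideal J R" "J \<subseteq> P" and g: "g \<in> carrier R"
    and N: "ideal N R" "N \<subseteq> saturation R P (L <+> PIdl g)" and "g \<in> saturation R P (L <+> J \<cdot> N)"
  shows "g \<in> saturation R P L"
proof -
  have Pg: "ideal (PIdl g) R" and JPg: "ideal (J \<cdot> (PIdl g)) R"
    using cgenideal_ideal[OF g] ideal_prod_is_ideal[OF J(1) cgenideal_ideal[OF g]] .
  have "J \<cdot> (L <+> PIdl g) \<subseteq> L <+> J \<cdot> (PIdl g)"
    unfolding ideal_prod_distr(1)[OF J(1) L Pg]
    by (rule set_add_mono[OF ideal_prod_inter[THEN subset_trans] subset_refl]) (use J(1) L in auto)
  hence "J \<cdot> N \<subseteq> saturation R P (L <+> J \<cdot> (PIdl g))"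
    using ideal_prod_mono[OF J(1) saturation_ideal[OF P add_ideals[OF L Pg]] subset_refl N(2)]
      ideal_prod_saturation_subset[OF P J(1) add_ideals[OF L Pg]] saturation_mono by blast
  hence "L <+> J \<cdot> N \<subseteq> saturation R P (L <+> J \<cdot> (PIdl g))"
    using saturation_upper_set_add(1)[OF P L JPg]
    by (intro set_add_least[OF saturation_ideal[OF P add_ideals[OF L JPg]]])
  hence "g \<in> saturation R P (L <+> J \<cdot> (PIdl g))"
    using assms(8) saturation_mono saturation_idem[OF P] by blast
  thus ?thesis by (rule saturation_absorb_ideal_prod_PIdl[OF P L J g])
qed

lemma nakayama_saturation:
  assumes P: "primeideal P R" and J: "ideal J R" "J \<subseteq> P" and G: "finite G" "G \<subseteq> carrier R"
    and L: "ideal L R" and "Idl G \<subseteq> saturation R P (L <+> J \<cdot> (Idl G))"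
  shows "Idl G \<subseteq> saturation R P L"
  using G L assms(7)
proof (induct G arbitrary: L rule: finite_induct)
  case (empty L)
  thus ?case using saturation_upper[OF P ideal_subset_carrier[OF empty.prems(2)]] ideal_zero[OF empty.prems(2)]
    by (auto simp: genideal_empty)
next
  case (insert g G0 L)
  have g: "g \<in> carrier R" and G0: "G0 \<subseteq> carrier R" using insert.prems(1) by auto
  define N where "N = Idl (insert g G0)"
  define N0 where "N0 = Idl G0"
  define L2 where "L2 = L <+> PIdl g"
  have N: "ideal N R" and N0: "ideal N0 R" and Pg: "ideal (PIdl g) R"
    unfolding N_def N0_def using genideal_ideal insert.prems(1) G0 cgenideal_ideal[OF g] by auto
  have L2: "ideal L2 R" unfolding L2_def using add_ideals[OF insert.prems(2) Pg] .
  have N_split: "N \<subseteq> N0 <+> PIdl g" unfolding N_def N0_def using genideal_insert_subset[OF g G0] .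
  have T: "ideal (L2 <+> J \<cdot> N0) R" using add_ideals[OF L2 ideal_prod_is_ideal[OF J(1) N0]] .
  have L2T: "L2 \<subseteq> L2 <+> J \<cdot> N0" and JN0T: "J \<cdot> N0 \<subseteq> L2 <+> J \<cdot> N0"
    using set_add_upper1 set_add_upper2 L2 ideal_prod_is_ideal[OF J(1) N0] by auto
  have LL2: "L \<subseteq> L2" and PgL2: "PIdl g \<subseteq> L2"
    unfolding L2_def using set_add_upper1 set_add_upper2 insert.prems(2) Pg by auto
  have "J \<cdot> N \<subseteq> J \<cdot> N0 <+> J \<cdot> (PIdl g)"
    using ideal_prod_mono[OF J(1) add_ideals[OF N0 Pg] subset_refl N_split]
      ideal_prod_distr(1)[OF J(1) N0 Pg] by simp
  also have "\<dots> \<subseteq> L2 <+> J \<cdot> N0"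
    using JN0T L2T PgL2 ideal_prod_inter[OF J(1) Pg] by (intro set_add_least[OF T]) blast+
  finally have "L <+> J \<cdot> N \<subseteq> L2 <+> J \<cdot> N0"
    using LL2 L2T by (intro set_add_least[OF T]) blast+
  moreover have "N0 \<subseteq> N" unfolding N0_def N_def using subset_Idl_subset[OF insert.prems(1)] by blast
  ultimately have "N0 \<subseteq> saturation R P (L2 <+> J \<cdot> N0)"
    using insert.prems(3) saturation_mono unfolding N_def by blast
  hence N0_sat: "N0 \<subseteq> saturation R P L2" using insert.hyps(3)[OF G0 L2] unfolding N0_def by blast
  have N_sat: "N \<subseteq> saturation R P L2"
    using N_split N0_sat saturation_upper_set_add(2)[OF P insert.prems(2) Pg]
      set_add_least[OF saturation_ideal[OF P L2]] unfolding L2_def by blast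
  have "g \<in> saturation R P (L <+> J \<cdot> N)"
    using insert.prems(3) genideal_self[OF insert.prems(1)] unfolding N_def by blast
  hence "g \<in> saturation R P L"
    using saturation_absorb_PIdl[OF P insert.prems(2) J g N] N_sat unfolding L2_def by blast
  hence "L2 \<subseteq> saturation R P L"
    unfolding L2_def using saturation_upper[OF P ideal_subset_carrier[OF insert.prems(2)]]
      cgenideal_minimal[OF saturation_ideal[OF P insert.prems(2)]]
    by (intro set_add_least[OF saturation_ideal[OF P insert.prems(2)]])
  thus ?case using N_sat saturation_mono[of L2 "saturation R P L" P] saturation_idem[OF P]
    unfolding N_def by blast
qed

end

definition stabilizes :: "(nat \<Rightarrow> 'a set) \<Rightarrow> bool" where
  "stabilizes X \<longleftrightarrow> (\<exists>n0. \<forall>n\<ge>n0. X n = X n0)"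

context cring
begin

lemma saturated_eq_if_Int_eq_and_set_add_eq:
  assumes P: "primeideal P R" and A: "saturated R P A" and B: "saturated R P B" and N: "ideal N R"
    and BA: "B \<subseteq> A" and Int_eq: "A \<inter> N = B \<inter> N"
    and add_eq: "saturation R P (A <+> N) = saturation R P (B <+> N)"
  shows "A = B"
proof
  have Ai: "ideal A R" and Bi: "ideal B R" using A B unfolding saturated_def by auto
  show "A \<subseteq> B"
  proof
    fix a assume a: "a \<in> A"
    have ac: "a \<in> carrier R" using ideal.Icarr[OF Ai a] .
    have "a \<in> saturation R P (B <+> N)" using saturation_upper_set_add(1)[OF P Ai N] a add_eq by blast
    then obtain s where s: "s \<in> carrier R" "s \<notin> P" "s \<otimes> a \<in> B <+> N" by (rule saturationE)
    obtain b n where bn: "b \<in> B" "n \<in> N" "s \<otimes> a = b \<oplus> n" using s(3) set_add_mem_iff by metis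
    have "n = s \<otimes> a \<ominus> b" using bn(3) ideal.Icarr[OF Bi bn(1)] ideal.Icarr[OF N bn(2)] s(1) ac by algebra
    moreover have "s \<otimes> a \<ominus> b \<in> A" using ideal_minus[OF Ai ideal.I_l_closed[OF Ai a s(1)]] bn(1) BA by blast
    ultimately have "n \<in> B" using bn(2) Int_eq by blast
    hence "s \<otimes> a \<in> B" using bn(1,3) ideal_add[OF Bi] by simp
    hence "a \<in> saturation R P B" using saturationI[OF s(1,2) ac] by blast
    thus "a \<in> B" using B unfolding saturated_def by blast
  qed
qed (rule BA)

lemma stabilizes_if_Int_and_set_add_stabilize:
  assumes P: "primeideal P R" and N: "ideal N R" and X: "antimono X" "\<And>n. saturated R P (X n)"
    and "stabilizes (\<lambda>n. X n \<inter> N)" and "stabilizes (\<lambda>n. saturation R P (X n <+> N))"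
  shows "stabilizes X"
proof -
  obtain n1 where n1: "\<forall>n\<ge>n1. X n \<inter> N = X n1 \<inter> N" using assms(5) unfolding stabilizes_def by blast
  obtain n2 where n2: "\<forall>n\<ge>n2. saturation R P (X n <+> N) = saturation R P (X n2 <+> N)"
    using assms(6) unfolding stabilizes_def by blast
  have "X n = X (max n1 n2)" if "n \<ge> max n1 n2" for n
  proof (rule sym, rule saturated_eq_if_Int_eq_and_set_add_eq[OF P X(2) X(2) N])
    show "X n \<subseteq> X (max n1 n2)" using antimonoD[OF X(1) that] .
    show "X (max n1 n2) \<inter> N = X n \<inter> N" using n1 that by (metis max.bounded_iff order_refl)
    show "saturation R P (X (max n1 n2) <+> N) = saturation R P (X n <+> N)"
      using n2 that by (metis max.bounded_iff order_refl)
  qed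
  thus ?thesis unfolding stabilizes_def by blast
qed

text \<open>If \<open>P g \<subseteq> N'\<close> then \<open>(N' + (g)) R\<^sub>P / N' R\<^sub>P\<close> is a vector space of dimension at most one over
  the residue field of \<open>R\<^sub>P\<close>, so nothing lies strictly between its ends.\<close>

lemma saturated_between_set_add_PIdl:
  assumes P: "primeideal P R" and N': "saturated R P N'" and g: "g \<in> carrier R"
    and Pg: "\<And>p. p \<in> P \<Longrightarrow> p \<otimes> g \<in> N'"
    and Z: "saturated R P Z" "N' \<subseteq> Z" "Z \<subseteq> saturation R P (N' <+> PIdl g)" and "g \<notin> Z"
  shows "Z = N'"
proof
  have N'i: "ideal N' R" and Zi: "ideal Z R" using N' Z(1) unfolding saturated_def by auto
  show "Z \<subseteq> N'"
  proof
    fix y assume y: "y \<in> Z"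
    then obtain s where s: "s \<in> carrier R" "s \<notin> P" "s \<otimes> y \<in> N' <+> PIdl g" and yc: "y \<in> carrier R"
      using Z(3) by (blast elim: saturationE)
    obtain n a where na: "n \<in> N'" "a \<in> carrier R" "s \<otimes> y = n \<oplus> a \<otimes> g"
      using s(3) set_add_PIdl_mem_iff by metis
    have nc: "n \<in> carrier R" using ideal.Icarr[OF N'i na(1)] .
    show "y \<in> N'"
    proof (cases "a \<in> P")
      case True
      hence "s \<otimes> y \<in> N'" using na ideal_add[OF N'i na(1) Pg] by simp
      thus ?thesis using saturationI[OF s(1,2) yc] N' unfolding saturated_def by blast
    next
      case False
      have "a \<otimes> g = s \<otimes> y \<ominus> n" using na(3) nc na(2) g s(1) yc by algebra
      also have "\<dots> \<in> Z" using ideal_minus[OF Zi ideal.I_l_closed[OF Zi y s(1)]] na(1) Z(2) by blast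
      finally have "g \<in> Z" using saturationI[OF na(2) False g] Z(1) unfolding saturated_def by blast
      thus ?thesis using \<open>g \<notin> Z\<close> by contradiction
    qed
  qed
qed (rule Z(2))

lemma antimono_saturated_stabilizes_PIdl:
  assumes P: "primeideal P R" and N': "saturated R P N'" and g: "g \<in> carrier R"
    and Pg: "\<And>p. p \<in> P \<Longrightarrow> p \<otimes> g \<in> N'"
    and Z: "antimono Z" "\<And>n. saturated R P (Z n)" "\<And>n. N' \<subseteq> Z n"
      "\<And>n. Z n \<subseteq> saturation R P (N' <+> PIdl g)"
  shows "stabilizes Z"
proof (cases "\<forall>n. g \<in> Z n")
  case True
  have N'i: "ideal N' R" and Zi: "ideal (Z n) R" for n using N' Z(2) unfolding saturated_def by auto
  have "saturation R P (N' <+> PIdl g) \<subseteq> Z n" for n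
    using saturation_mono[OF set_add_least[OF Zi Z(3) cgenideal_minimal[OF Zi]]] True Z(2)
    unfolding saturated_def by blast
  thus ?thesis using Z(4) unfolding stabilizes_def by (metis subset_antisym)
next
  case False
  then obtain n1 where "g \<notin> Z n1" by blast
  hence "Z n = N'" if "n \<ge> n1" for n
    using saturated_between_set_add_PIdl[OF P N' g Pg Z(2,3,4)] antimonoD[OF Z(1) that] by blast
  thus ?thesis unfolding stabilizes_def by (metis order_refl)
qed

lemma saturation_genideal_insert_subset:
  assumes P: "primeideal P R" and K: "ideal K R" and g: "g \<in> carrier R" and G0: "G0 \<subseteq> carrier R"
  shows "saturation R P (K <+> Idl (insert g G0)) \<subseteq> saturation R P (saturation R P (K <+> Idl G0) <+> PIdl g)"
proof (rule saturation_mono)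
  define N' where "N' = saturation R P (K <+> Idl G0)"
  have N'i: "ideal N' R" and Pg: "ideal (PIdl g) R"
    unfolding N'_def using saturation_ideal[OF P add_ideals[OF K genideal_ideal[OF G0]]] cgenideal_ideal[OF g] .
  have KN': "K \<subseteq> N'" and G0N': "Idl G0 \<subseteq> N'"
    unfolding N'_def using saturation_upper_set_add[OF P K genideal_ideal[OF G0]] by auto
  have "insert g G0 \<subseteq> N' <+> PIdl g"
    using set_add_upper1[OF N'i Pg] set_add_upper2[OF N'i Pg] cgenideal_self[OF g]
      genideal_self[OF G0] G0N' by blast
  thus "K <+> Idl (insert g G0) \<subseteq> N' <+> PIdl g"
    using set_add_upper1[OF N'i Pg] KN' genideal_minimal[OF add_ideals[OF N'i Pg]]
    by (intro set_add_least[OF add_ideals[OF N'i Pg]]) auto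
qed

text \<open>The vector-space case of the Artinian property below: if \<open>P G \<subseteq> K\<close>, then
  \<open>(K + (G))R\<^sub>P / K R\<^sub>P\<close> is a vector space of dimension at most \<open>card G\<close> over the residue field.\<close>

lemma antimono_saturated_stabilizes_span:
  assumes P: "primeideal P R" and K: "saturated R P K" and G: "finite G" "G \<subseteq> carrier R"
    and "\<And>p g. p \<in> P \<Longrightarrow> g \<in> G \<Longrightarrow> p \<otimes> g \<in> K"
    and "antimono X" "\<And>n. saturated R P (X n)" "\<And>n. K \<subseteq> X n"
    and "\<And>n. X n \<subseteq> saturation R P (K <+> Idl G)"
  shows "stabilizes X"
  using G assms(5-9)
proof (induct G arbitrary: X rule: finite_induct)
  case (empty X)
  have Ki: "ideal K R" using K unfolding saturated_def by blast
  have "K <+> Idl {} = K"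
  proof
    show "K <+> Idl {} \<subseteq> K" by (rule set_add_least[OF Ki subset_refl]) (simp add: genideal_empty ideal_zero[OF Ki])
    show "K \<subseteq> K <+> Idl {}" using set_add_upper1[OF Ki genideal_ideal[of "{}"]] by simp
  qed
  hence "X n = K" for n using empty.prems(5)[of n] empty.prems(6)[of n] K unfolding saturated_def by auto
  thus ?case unfolding stabilizes_def by simp
next
  case (insert g G0 X)
  have Ki: "ideal K R" using K unfolding saturated_def by blast
  have g: "g \<in> carrier R" and G0: "G0 \<subseteq> carrier R" using insert.prems(1) by auto
  have Xi: "ideal (X n) R" for n using insert.prems(4) unfolding saturated_def by blast
  define N' where "N' = saturation R P (K <+> Idl G0)"
  have N': "saturated R P N'"
    unfolding N'_def using saturated_saturation[OF P add_ideals[OF Ki genideal_ideal[OF G0]]] .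
  have N'i: "ideal N' R" and Pg: "ideal (PIdl g) R" using N' cgenideal_ideal[OF g] unfolding saturated_def by auto
  have KN': "K \<subseteq> N'" unfolding N'_def using saturation_upper_set_add[OF P Ki genideal_ideal[OF G0]] by auto
  have stab_Int: "stabilizes (\<lambda>n. X n \<inter> N')"
  proof (rule insert.hyps(3)[OF G0])
    show "antimono (\<lambda>n. X n \<inter> N')" using antimonoD[OF insert.prems(3)] by (intro antimonoI) blast
    show "saturated R P (X n \<inter> N')" for n using saturated_Int[OF P insert.prems(4) N'] .
    show "K \<subseteq> X n \<inter> N'" for n using insert.prems(5) KN' by blast
  qed (use insert.prems(2) N'_def in auto)
  have "stabilizes (\<lambda>n. saturation R P (X n <+> N'))"
  proof (rule antimono_saturated_stabilizes_PIdl[OF P N' g])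
    show "p \<otimes> g \<in> N'" if "p \<in> P" for p using insert.prems(2)[OF that] KN' by blast
    show "antimono (\<lambda>n. saturation R P (X n <+> N'))" using antimonoD[OF insert.prems(3)]
      by (intro antimonoI saturation_mono set_add_mono) auto
    show "saturated R P (saturation R P (X n <+> N'))" "N' \<subseteq> saturation R P (X n <+> N')" for n
      using saturated_saturation[OF P add_ideals[OF Xi N'i]] saturation_upper_set_add(2)[OF P Xi N'i] .
    have "X n <+> N' \<subseteq> saturation R P (N' <+> PIdl g)" for n
      using insert.prems(6) saturation_genideal_insert_subset[OF P Ki g G0, folded N'_def]
        saturation_upper_set_add(1)[OF P N'i Pg]
      by (intro set_add_least[OF saturation_ideal[OF P add_ideals[OF N'i Pg]]]) auto
    thus "saturation R P (X n <+> N') \<subseteq> saturation R P (N' <+> PIdl g)" for n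
      using saturation_mono saturation_idem[OF P] by metis
  qed
  thus ?case by (rule stabilizes_if_Int_and_set_add_stabilize[OF P N'i insert.prems(3,4) stab_Int])
qed

end

text \<open>The Artinian property of \<open>R\<^sub>P / K R\<^sub>P\<close> when \<open>P\<^sup>k \<subseteq> K\<close>, proved along the filtration by
  the powers of \<open>P\<close>.\<close>

lemma (in noetherian_cring) antimono_saturated_stabilizes:
  assumes P: "primeideal P R" and "saturated R P K" "ideal_pow R P k \<subseteq> K"
    and "antimono X" "\<And>n. saturated R P (X n)" "\<And>n. K \<subseteq> X n"
  shows "stabilizes X"
  using assms(2-6)
proof (induct k arbitrary: K X)
  case (0 K X)
  have "X n = carrier R" for n
    using 0(2) 0(5)[of n] 0(4)[of n] ideal_subset_carrier[of "X n"] unfolding saturated_def by auto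
  thus ?case unfolding stabilizes_def by simp
next
  case (Suc k K X)
  have Pi: "ideal P R" using primeideal.axioms(1)[OF P] .
  have Ki: "ideal K R" using Suc.prems(1) unfolding saturated_def by blast
  have Xi: "ideal (X n) R" for n using Suc.prems(4) unfolding saturated_def by blast
  have Pk: "ideal (ideal_pow R P k) R" using ideal_pow_ideal[OF Pi] .
  define M where "M = saturation R P (K <+> ideal_pow R P k)"
  have M: "saturated R P M" unfolding M_def using saturated_saturation[OF P add_ideals[OF Ki Pk]] .
  have Mi: "ideal M R" using M unfolding saturated_def by blast
  have KM: "K \<subseteq> M" and PkM: "ideal_pow R P k \<subseteq> M"
    unfolding M_def using saturation_upper_set_add[OF P Ki Pk] by auto
  have stab_add: "stabilizes (\<lambda>n. saturation R P (X n <+> M))"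
  proof (rule Suc.hyps[OF M PkM])
    show "antimono (\<lambda>n. saturation R P (X n <+> M))" using antimonoD[OF Suc.prems(3)]
      by (intro antimonoI saturation_mono set_add_mono) auto
    show "saturated R P (saturation R P (X n <+> M))" for n
      using saturated_saturation[OF P add_ideals[OF Xi Mi]] .
    show "M \<subseteq> saturation R P (X n <+> M)" for n using saturation_upper_set_add(2)[OF P Xi Mi] .
  qed
  obtain G where G: "G \<subseteq> carrier R" "finite G" "ideal_pow R P k = Idl G" using finetely_gen[OF Pk] by blast
  have stab_Int: "stabilizes (\<lambda>n. X n \<inter> M)"
  proof (rule antimono_saturated_stabilizes_span[OF P Suc.prems(1) G(2,1)])
    show "p \<otimes> g \<in> K" if "p \<in> P" "g \<in> G" for p g
      using ideal_prod.prod[OF that(1), of g "ideal_pow R P k"] genideal_self[OF G(1)] G(3) that(2)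
        Suc.prems(2) by auto
    show "antimono (\<lambda>n. X n \<inter> M)" using antimonoD[OF Suc.prems(3)] by (intro antimonoI) blast
    show "saturated R P (X n \<inter> M)" for n using saturated_Int[OF P Suc.prems(4) M] .
    show "K \<subseteq> X n \<inter> M" for n using Suc.prems(5) KM by blast
    show "X n \<inter> M \<subseteq> saturation R P (K <+> Idl G)" for n unfolding M_def G(3) by blast
  qed
  show ?case using stabilizes_if_Int_and_set_add_stabilize[OF P Mi Suc.prems(3,4) stab_Int stab_add] .
qed

section \<open>Krull's principal ideal theorem and height theorem\<close>

text \<open>The preimage in \<open>R\<close> of the \<open>n\<close>-th symbolic power of \<open>Q/Q'\<close> in \<open>R/Q'\<close>.\<close>

definition symbolic_pow :: "('a, 'b) ring_scheme \<Rightarrow> 'a set \<Rightarrow> 'a set \<Rightarrow> nat \<Rightarrow> 'a set" where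
  "symbolic_pow R Q' Q n = saturation R Q (Q' <+>\<^bsub>R\<^esub> ideal_pow R Q n)"

lemma (in noetherian_cring) symbolic_pow_Suc_psubset:
  assumes Q': "primeideal Q' R" and Q: "primeideal Q R" and "Q' \<subset> Q"
  shows "symbolic_pow R Q' Q (Suc n) \<subset> symbolic_pow R Q' Q n"
proof
  have Qi: "ideal Q R" and Q'i: "ideal Q' R" and Qn: "ideal (ideal_pow R Q n) R"
    using Q Q' primeideal.axioms(1) ideal_pow_ideal by blast+
  show "symbolic_pow R Q' Q (Suc n) \<subseteq> symbolic_pow R Q' Q n"
    unfolding symbolic_pow_def
    by (intro saturation_mono set_add_mono subset_refl ideal_pow_Suc_subset[OF Qi])
  show "symbolic_pow R Q' Q (Suc n) \<noteq> symbolic_pow R Q' Q n"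
  proof
    assume eq: "symbolic_pow R Q' Q (Suc n) = symbolic_pow R Q' Q n"
    obtain G where G: "G \<subseteq> carrier R" "finite G" "ideal_pow R Q n = Idl G" using finetely_gen[OF Qn] by blast
    have "ideal_pow R Q n \<subseteq> saturation R Q (Q' <+> Q \<cdot> ideal_pow R Q n)"
      using saturation_upper_set_add(2)[OF Q Q'i Qn] eq unfolding symbolic_pow_def by simp
    hence "ideal_pow R Q n \<subseteq> saturation R Q Q'"
      using nakayama_saturation[OF Q Qi subset_refl G(2,1) Q'i] unfolding G(3) by blast
    hence "Q \<subseteq> Q'"
      using primeideal_ideal_pow_subsetD[OF Q' Qi] saturation_primeideal[OF Q Q'] assms(3) by blast
    thus False using assms(3) by blast
  qed
qed

lemma (in cring) saturation_set_add_PIdl_cancel: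
  assumes P: "primeideal P R" and Q: "primeideal Q R" "Q \<subseteq> P" and A: "saturated R Q A"
    and A': "ideal A' R" "A' \<subseteq> A" and x: "x \<in> carrier R" "x \<notin> Q"
    and "A \<subseteq> saturation R P (A' <+> PIdl x)"
  shows "A \<subseteq> saturation R P (A' <+> (PIdl x) \<cdot> A)"
proof
  have Ai: "ideal A R" using A unfolding saturated_def by blast
  fix r assume r: "r \<in> A"
  then obtain s where s: "s \<in> carrier R" "s \<notin> P" "s \<otimes> r \<in> A' <+> PIdl x" and rc: "r \<in> carrier R"
    using assms(9) by (blast elim: saturationE)
  obtain q a where qa: "q \<in> A'" "a \<in> carrier R" "s \<otimes> r = q \<oplus> a \<otimes> x"
    using s(3) set_add_PIdl_mem_iff by metis
  have qc: "q \<in> carrier R" using ideal.Icarr[OF A'(1) qa(1)] .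
  have "x \<otimes> a = s \<otimes> r \<ominus> q" using qa(3) qa(2) qc s(1) rc x(1) by algebra
  also have "\<dots> \<in> A" using ideal_minus[OF Ai ideal.I_l_closed[OF Ai r s(1)]] qa(1) A'(2) by blast
  finally have "a \<in> A" using saturation_cancel[OF Q(1) x qa(2)] A unfolding saturated_def by blast
  hence "a \<otimes> x \<in> (PIdl x) \<cdot> A"
    using ideal_prod.prod[where R=R, OF cgenideal_self[OF x(1)] \<open>a \<in> A\<close>] x(1) qa(2) by (simp add: m_comm)
  hence "s \<otimes> r \<in> A' <+> (PIdl x) \<cdot> A" using qa(1,3) set_add_memI by metis
  thus "r \<in> saturation R P (A' <+> (PIdl x) \<cdot> A)" using saturationI[OF s(1,2) rc] by blast
qed

text \<open>Krull's principal ideal theorem, in \<open>R/Q'\<close>: a prime minimal over a principal ideal has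
  height at most one. The ideals \<open>S n + (x)\<close>, for \<open>S n\<close> the symbolic powers of \<open>Q\<close>, decrease and
  contain \<open>Q' + (x)\<close>, so they stabilise in \<open>R\<^sub>P\<close>, which is Artinian modulo \<open>Q' + (x)\<close>; Nakayama's
  lemma turns this into \<open>S n = S (n + 1)\<close>, which is impossible for \<open>Q' \<subset> Q\<close>.\<close>

theorem (in noetherian_cring) principal_ideal_theorem:
  assumes Q': "primeideal Q' R" and Q: "primeideal Q R" "Q' \<subseteq> Q" "Q \<subset> P" and x: "x \<in> carrier R"
    and min: "minimal_prime_over R (Q' <+> PIdl x) P"
  shows "Q = Q'"
proof (rule ccontr)
  assume "Q \<noteq> Q'"
  hence Q'Q: "Q' \<subset> Q" using Q(2) by blast
  have P: "primeideal P R" and Q'xP: "Q' <+> PIdl x \<subseteq> P"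
    using min unfolding minimal_prime_over_def by auto
  have Q'i: "ideal Q' R" and Qi: "ideal Q R" and Px: "ideal (PIdl x) R"
    using Q' Q(1) primeideal.axioms(1) cgenideal_ideal[OF x] by auto
  have xP: "PIdl x \<subseteq> P" using Q'xP set_add_upper2[OF Q'i Px] by blast
  have xQ: "x \<notin> Q"
  proof
    assume "x \<in> Q"
    hence "Q' <+> PIdl x \<subseteq> Q" using Q(2) cgenideal_minimal[OF Qi] by (intro set_add_least[OF Qi]) auto
    thus False using min Q unfolding minimal_prime_over_def by blast
  qed
  define S where "S = symbolic_pow R Q' Q"
  have S: "saturated R Q (S n)" for n
    unfolding S_def symbolic_pow_def using saturated_saturation[OF Q(1) add_ideals[OF Q'i ideal_pow_ideal[OF Qi]]] .
  have Si: "ideal (S n) R" for n using S unfolding saturated_def by blast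
  have Q'S: "Q' \<subseteq> S n" for n
    unfolding S_def symbolic_pow_def using saturation_upper_set_add(1)[OF Q(1) Q'i ideal_pow_ideal[OF Qi]] .
  have S_Suc: "S (Suc n) \<subset> S n" for n unfolding S_def using symbolic_pow_Suc_psubset[OF Q' Q(1) Q'Q] .
  have S_antimono: "antimono S"
    using lift_Suc_antimono_le[of S, OF psubset_imp_subset[OF S_Suc]] by (intro antimonoI) blast
  define X where "X n = saturation R P (S n <+> PIdl x)" for n
  obtain k where k: "ideal_pow R P k \<subseteq> saturation R P (Q' <+> PIdl x)"
    using minimal_prime_over_ideal_pow_subset[OF min add_ideals[OF Q'i Px]] by blast
  have "stabilizes X"
  proof (rule antimono_saturated_stabilizes[OF P saturated_saturation[OF P add_ideals[OF Q'i Px]] k])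
    show "antimono X" unfolding X_def using antimonoD[OF S_antimono]
      by (intro antimonoI saturation_mono set_add_mono subset_refl)
    show "saturated R P (X n)" for n unfolding X_def using saturated_saturation[OF P add_ideals[OF Si Px]] .
    show "saturation R P (Q' <+> PIdl x) \<subseteq> X n" for n
      unfolding X_def by (intro saturation_mono set_add_mono Q'S subset_refl)
  qed
  then obtain n where "X (Suc n) = X n" unfolding stabilizes_def using le_Suc_eq by blast
  hence "S n \<subseteq> saturation R P (S (Suc n) <+> PIdl x)"
    using saturation_upper_set_add(1)[OF P Si Px, of n] unfolding X_def by simp
  hence "S n \<subseteq> saturation R P (S (Suc n) <+> (PIdl x) \<cdot> S n)"
    using S_Suc[of n] Q(3) by (intro saturation_set_add_PIdl_cancel[OF P Q(1) _ S Si _ x(1) xQ]) auto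
  moreover obtain G where G: "G \<subseteq> carrier R" "finite G" "S n = Idl G" using finetely_gen[OF Si] by blast
  ultimately have "S n \<subseteq> saturation R P (S (Suc n))"
    using nakayama_saturation[OF P Px xP G(2,1) Si] by simp
  also have "\<dots> \<subseteq> S (Suc n)" using saturation_antimono[OF less_imp_le[OF Q(3)]] S unfolding saturated_def by blast
  finally show False using S_Suc[of n] by blast
qed

definition prime_chain :: "('a, 'b) ring_scheme \<Rightarrow> nat \<Rightarrow> (nat \<Rightarrow> 'a set) \<Rightarrow> bool" where
  "prime_chain R n C \<longleftrightarrow> (\<forall>i\<le>n. primeideal (C i) R) \<and> (\<forall>i<n. C i \<subset> C (Suc i))"

lemma prime_chain_subset:
  assumes "prime_chain R n C" "i \<le> j" "j \<le> n"
  shows "C i \<subseteq> C j"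
  using assms(2,3)
proof (induct j)
  case (Suc j)
  show ?case
  proof (cases "i = Suc j")
    case False
    hence "C i \<subseteq> C j" using Suc by simp
    moreover have "C j \<subset> C (Suc j)" using assms(1) Suc(3) unfolding prime_chain_def by simp
    ultimately show ?thesis by blast
  qed simp
qed simp

lemma prime_chain_psubset:
  assumes "prime_chain R n C" "i < j" "j \<le> n"
  shows "C i \<subset> C j"
proof -
  have "C i \<subset> C (Suc i)" using assms unfolding prime_chain_def by simp
  moreover have "C (Suc i) \<subseteq> C j" using prime_chain_subset[OF assms(1)] assms(2,3) by simp
  ultimately show ?thesis by blast
qed

lemma prime_chain_Suc_D: "prime_chain R (Suc n) C \<Longrightarrow> prime_chain R n C"
  unfolding prime_chain_def by simp

lemma prime_chain_update_last:
  assumes "prime_chain R n C" "primeideal Q R" "C n \<subseteq> Q"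
  shows "prime_chain R n (C(n := Q))"
  unfolding prime_chain_def
proof (intro conjI allI impI)
  fix i assume "i \<le> n"
  thus "primeideal ((C(n := Q)) i) R" using assms(1,2) unfolding prime_chain_def by simp
next
  fix i assume i: "i < n"
  show "(C(n := Q)) i \<subset> (C(n := Q)) (Suc i)"
  proof (cases "Suc i = n")
    case True thus ?thesis using prime_chain_psubset[OF assms(1) i] i assms(3) by auto
  next
    case False thus ?thesis using assms(1) i unfolding prime_chain_def by simp
  qed
qed

lemma (in cring) minimal_prime_over_set_add_PIdl:
  assumes P: "primeideal P R" and Q: "primeideal Q R" "Q \<subset> P"
    and Qmax: "\<And>Q''. primeideal Q'' R \<Longrightarrow> Q \<subseteq> Q'' \<Longrightarrow> Q'' \<subset> P \<Longrightarrow> Q'' = Q"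
    and x: "x \<in> P" "x \<notin> Q"
  shows "minimal_prime_over R (Q <+> PIdl x) P"
proof -
  have Pi: "ideal P R" and Qi: "ideal Q R" using P Q primeideal.axioms(1) by auto
  have xc: "x \<in> carrier R" using ideal.Icarr[OF Pi x(1)] .
  have "Q <+> PIdl x \<subseteq> P"
    using Q(2) cgenideal_minimal[OF Pi x(1)] by (intro set_add_least[OF Pi]) auto
  moreover have "P' = P" if "primeideal P' R" "Q <+> PIdl x \<subseteq> P'" "P' \<subseteq> P" for P'
  proof (rule ccontr)
    assume "P' \<noteq> P"
    moreover have "Q \<subseteq> P'" "x \<in> P'"
      using that(2) set_add_upper1[OF Qi cgenideal_ideal[OF xc]]
        set_add_upper2[OF Qi cgenideal_ideal[OF xc]] cgenideal_self[OF xc] by auto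
    ultimately show False using Qmax[OF that(1)] that(3) x(2) by blast
  qed
  ultimately show ?thesis using P unfolding minimal_prime_over_def by blast
qed

lemma (in cring) saturation_set_add_PIdl_pairE:
  assumes Q: "ideal Q R" and x: "x \<in> carrier R" and "z \<in> saturation R P (Q <+> PIdl x)"
  obtains q where "q \<in> Q" "z \<in> saturation R P (Idl {q, x})"
proof -
  obtain s where s: "s \<in> carrier R" "s \<notin> P" "s \<otimes> z \<in> Q <+> PIdl x" and z: "z \<in> carrier R"
    using assms(3) by (rule saturationE)
  then obtain q a where q: "q \<in> Q" "a \<in> carrier R" "s \<otimes> z = q \<oplus> a \<otimes> x"
    unfolding set_add_PIdl_mem_iff by blast
  have qx: "{q, x} \<subseteq> carrier R" using ideal.Icarr[OF Q q(1)] x by blast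
  have "q \<oplus> a \<otimes> x \<in> Idl {q, x}"
    using genideal_self[OF qx] ideal_add[OF genideal_ideal[OF qx]] ideal.I_l_closed[OF genideal_ideal[OF qx]] q(2)
    by blast
  thus thesis using that saturationI[OF s(1,2) z] q by metis
qed

text \<open>The inductive step of the height theorem: if no prime lies strictly between \<open>Q\<close> and \<open>P\<close>,
  then \<open>Q\<close> is minimal over an ideal with fewer generators than \<open>Idl X\<close>. A generator \<open>x \<notin> Q\<close> is
  singled out, and every other generator \<open>y\<close> is replaced by an element \<open>q\<^sub>y \<in> Q\<close> such that
  \<open>y\<close> is in the radical of \<open>(q\<^sub>y, x)\<close> in \<open>R\<^sub>P\<close>; the principal ideal theorem shows minimality.\<close>

lemma (in noetherian_cring) exists_minimal_prime_over_fewer_generators: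
  assumes X: "finite X" "X \<subseteq> carrier R" and min: "minimal_prime_over R (Idl X) P"
    and Q: "primeideal Q R" "Q \<subset> P"
    and Qmax: "\<And>Q''. primeideal Q'' R \<Longrightarrow> Q \<subseteq> Q'' \<Longrightarrow> Q'' \<subset> P \<Longrightarrow> Q'' = Q"
  obtains Y where "finite Y" "Y \<subseteq> carrier R" "card Y < card X" "minimal_prime_over R (Idl Y) Q"
proof -
  have P: "primeideal P R" and XP: "Idl X \<subseteq> P" using min unfolding minimal_prime_over_def by auto
  have Pi: "ideal P R" and Qi: "ideal Q R" using P Q primeideal.axioms(1) by auto
  have "\<not> X \<subseteq> Q"
  proof
    assume "X \<subseteq> Q"
    hence "Idl X \<subseteq> Q" using genideal_minimal[OF Qi] by blast
    thus False using min Q unfolding minimal_prime_over_def by blast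
  qed
  then obtain x where x: "x \<in> X" "x \<notin> Q" by blast
  have xP: "x \<in> P" and xc: "x \<in> carrier R" using x(1) XP genideal_self[OF X(2)] X(2) by auto
  have Px: "ideal (PIdl x) R" using cgenideal_ideal[OF xc] .
  have "\<exists>q\<in>Q. \<exists>n::nat. y [^] n \<in> saturation R P (Idl {q, x})" if y: "y \<in> X" for y
  proof -
    obtain n :: nat where "y [^] n \<in> saturation R P (Q <+> PIdl x)"
      using minimal_prime_over_nat_pow_in_saturation[OF minimal_prime_over_set_add_PIdl[OF P Q Qmax xP x(2)]
          add_ideals[OF Qi Px]] y XP genideal_self[OF X(2)] by blast
    then obtain q where "q \<in> Q" "y [^] n \<in> saturation R P (Idl {q, x})"
      by (rule saturation_set_add_PIdl_pairE[OF Qi xc])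
    thus ?thesis by blast
  qed
  then obtain q where q: "\<And>y. y \<in> X \<Longrightarrow> q y \<in> Q" "\<And>y. y \<in> X \<Longrightarrow> \<exists>n::nat. y [^] n \<in> saturation R P (Idl {q y, x})"
    by metis
  define Y where "Y = q ` (X - {x})"
  have YQ: "Y \<subseteq> Q" unfolding Y_def using q(1) by blast
  have Yc: "Y \<subseteq> carrier R" using YQ ideal_subset_carrier[OF Qi] by blast
  have "card Y < card X"
    unfolding Y_def using card_image_le[of "X - {x}" q] X(1) x(1) card_Diff1_less[of X x] by simp
  moreover have "minimal_prime_over R (Idl Y) Q"
    unfolding minimal_prime_over_def
  proof (intro conjI allI impI)
    show "primeideal Q R" "Idl Y \<subseteq> Q" using Q(1) genideal_minimal[OF Qi YQ] by auto
    fix Q' assume Q': "primeideal Q' R" "Idl Y \<subseteq> Q'" "Q' \<subseteq> Q"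
    have K: "ideal (Q' <+> PIdl x) R" using add_ideals[OF primeideal.axioms(1)[OF Q'(1)] Px] .
    have xK: "x \<in> Q' <+> PIdl x" and Q'K: "Q' \<subseteq> Q' <+> PIdl x"
      using set_add_upper1[OF primeideal.axioms(1)[OF Q'(1)] Px]
        set_add_upper2[OF primeideal.axioms(1)[OF Q'(1)] Px] cgenideal_self[OF xc] by auto
    have pow: "\<exists>n::nat. y [^] n \<in> saturation R P (Q' <+> PIdl x)" if y: "y \<in> X" for y
    proof (cases "y = x")
      case True
      have "x \<in> saturation R P (Q' <+> PIdl x)"
        using xK saturation_upper[OF P ideal_subset_carrier[OF K]] by blast
      hence "x [^] (1::nat) \<in> saturation R P (Q' <+> PIdl x)" using xc by simp
      thus ?thesis using True by blast
    next
      case False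
      have "q y \<in> Y" unfolding Y_def using y False by (intro imageI) simp
      hence "q y \<in> Q'" using Q'(2) genideal_self[OF Yc] by (meson subsetD)
      hence qx: "Idl {q y, x} \<subseteq> Q' <+> PIdl x" using Q'K xK by (intro genideal_minimal[OF K]) auto
      from q(2)[OF y] obtain n :: nat where "y [^] n \<in> saturation R P (Idl {q y, x})" ..
      thus ?thesis using saturation_mono[OF qx] by blast
    qed
    have "Q' <+> PIdl x \<subseteq> P"
      using Q'(3) Q(2) cgenideal_minimal[OF Pi xP] by (intro set_add_least[OF Pi]) auto
    hence "minimal_prime_over R (Q' <+> PIdl x) P"
      using minimal_prime_over_if_nat_pow_in_saturation[OF min X(2) _ pow] by blast
    thus "Q' = Q" using principal_ideal_theorem[OF Q'(1) Q(1) Q'(3) Q(2) xc] by simp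
  qed
  ultimately show thesis using that[of Y] X(1) Yc unfolding Y_def by blast
qed

theorem (in noetherian_cring) krull_height_theorem:
  assumes "finite X" "X \<subseteq> carrier R" "minimal_prime_over R (Idl X) P" "prime_chain R r C" "C r = P"
  shows "r \<le> card X"
  using assms
proof (induct "card X" arbitrary: X P C r rule: less_induct)
  case less
  show ?case
  proof (cases r)
    case (Suc r')
    have P: "primeideal P R" using less.prems(3) unfolding minimal_prime_over_def by blast
    have CP: "C r' \<subset> P" using prime_chain_psubset[OF less.prems(4), of r' r] less.prems(5) Suc by simp
    define F where "F = {Q. primeideal Q R \<and> C r' \<subseteq> Q \<and> Q \<subset> P}"
    have "C r' \<in> F" using less.prems(4) CP Suc unfolding F_def prime_chain_def by simp
    moreover have "\<And>I. I \<in> F \<Longrightarrow> ideal I R" unfolding F_def using primeideal.axioms(1) by blast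
    ultimately obtain Q where "Q \<in> F" and Qmax: "\<forall>Y\<in>F. Q \<subseteq> Y \<longrightarrow> Y = Q"
      using exists_maximal_element[of F] by blast
    hence Q: "primeideal Q R" "C r' \<subseteq> Q" "Q \<subset> P" unfolding F_def by auto
    have "Q'' = Q" if "primeideal Q'' R" "Q \<subseteq> Q''" "Q'' \<subset> P" for Q''
      using Qmax Q(2) that unfolding F_def by blast
    then obtain Y where Y: "finite Y" "Y \<subseteq> carrier R" "card Y < card X" "minimal_prime_over R (Idl Y) Q"
      using exists_minimal_prime_over_fewer_generators[OF less.prems(1-3) Q(1,3)] by blast
    have "prime_chain R r' C" using prime_chain_Suc_D less.prems(4) Suc by blast
    hence "prime_chain R r' (C(r' := Q))" using prime_chain_update_last Q(1,2) by blast
    hence "r' \<le> card Y" by (rule less.hyps[OF Y(3) Y(1,2,4)]) simp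
    thus ?thesis using Y(3) Suc by simp
  qed simp
qed

section \<open>Krull dimension of Noetherian local rings\<close>

lemma krull_dim_eq_Sup_prime_chain: "krull_dim R = Sup {enat n | n. \<exists>C. prime_chain R n C}"
  unfolding krull_dim_def prime_chain_def by simp

lemma prime_chain_le_krull_dim: "prime_chain R n C \<Longrightarrow> enat n \<le> krull_dim R"
  unfolding krull_dim_eq_Sup_prime_chain by (rule Sup_upper) blast

lemma krull_dim_le_if_prime_chains_le: "(\<And>n C. prime_chain R n C \<Longrightarrow> n \<le> d) \<Longrightarrow> krull_dim R \<le> enat d"
  unfolding krull_dim_eq_Sup_prime_chain by (rule Sup_least) auto

lemma krull_dim_attained:
  assumes dim: "krull_dim R = enat d" and P: "primeideal P R"
  obtains C where "prime_chain R d C"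
proof -
  define S where "S = {n. \<exists>C. prime_chain R n C}"
  have "0 \<in> S" using P unfolding S_def prime_chain_def by (auto intro!: exI[of _ "\<lambda>_. P"])
  have "n \<le> d" if "n \<in> S" for n using prime_chain_le_krull_dim that dim unfolding S_def by force
  hence fin: "finite S" using finite_subset[of S "{..d}"] by auto
  hence "Max S \<in> S" using \<open>0 \<in> S\<close> by (intro Max_in) auto
  have "n \<le> Max S" if "prime_chain R n C" for n C using Max_ge[OF fin] that unfolding S_def by blast
  hence "krull_dim R = enat (Max S)"
    using \<open>Max S \<in> S\<close> unfolding krull_dim_eq_Sup_prime_chain S_def
    by (intro antisym Sup_least Sup_upper) auto
  thus thesis using that \<open>Max S \<in> S\<close> dim unfolding S_def by auto
qed

lemma local_ring_max_ideal:
  assumes "local_ring R"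
  shows "maximalideal (max_ideal R) R" and "\<And>M. maximalideal M R \<Longrightarrow> M = max_ideal R"
proof -
  have ex: "\<exists>!m. maximalideal m R" using assms unfolding local_ring_def by blast
  show "maximalideal (max_ideal R) R" unfolding max_ideal_def using theI'[OF ex] .
  show "M = max_ideal R" if "maximalideal M R" for M
    unfolding max_ideal_def using ex the1_equality that by metis
qed

lemma noeth_local_ring_noetherian_cring: "noeth_local_ring R \<Longrightarrow> noetherian_cring R"
  unfolding noeth_local_ring_def local_ring_def by (simp add: noetherian_cring.intro)

lemma (in noetherian_cring) ideal_subset_unique_maximalideal:
  assumes "\<And>M. maximalideal M R \<Longrightarrow> M = m" and "ideal I R" "I \<noteq> carrier R"
  shows "I \<subseteq> m"
  using exists_maximalideal_superset[OF assms(2,3)] assms(1) by metis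

lemma noeth_local_ring_krull_dim:
  assumes "noeth_local_ring R"
  obtains d C where "krull_dim R = enat d" "prime_chain R d C"
proof -
  interpret noetherian_cring R using noeth_local_ring_noetherian_cring[OF assms] .
  define m where "m = max_ideal R"
  have m: "maximalideal m R" and m_unique: "\<And>M. maximalideal M R \<Longrightarrow> M = m"
    using local_ring_max_ideal assms unfolding noeth_local_ring_def m_def by auto
  have mi: "ideal m R" and mp: "primeideal m R"
    using m maximalideal.axioms(1) maximalideal_prime by auto
  obtain G where G: "G \<subseteq> carrier R" "finite G" "m = Idl\<^bsub>R\<^esub> G" using finetely_gen[OF mi] by blast
  have "n \<le> card G" if C: "prime_chain R n C" for n C
  proof (rule krull_height_theorem[OF G(2,1)])
    show "minimal_prime_over R (Idl\<^bsub>R\<^esub> G) m"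
      using mp G(3) unfolding minimal_prime_over_def by blast
    have "C n \<subseteq> m"
      using ideal_subset_unique_maximalideal[OF m_unique] C primeideal.I_notcarr
      unfolding prime_chain_def by (metis le_refl primeideal.axioms(1))
    thus "prime_chain R n (C(n := m))" using prime_chain_update_last[OF C mp] by blast
  qed simp
  then obtain d where "krull_dim R = enat d"
    using krull_dim_le_if_prime_chains_le[of R "card G"] by (meson enat_ile)
  thus thesis using that krull_dim_attained[OF _ mp] by blast
qed

section \<open>Quotient rings\<close>

context cring
begin

lemma carrier_FactRing: "carrier (R Quot I) = (+>) I ` carrier R"
  unfolding FactRing_def A_RCOSETS_def' by auto

lemma a_r_coset_eq_imp_mem:
  assumes I: "ideal I R" and W: "ideal W R" "I \<subseteq> W" and x: "x \<in> carrier R" and w: "w \<in> W"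
    and "I +> x = I +> w"
  shows "x \<in> W"
proof -
  have wc: "w \<in> carrier R" using ideal.Icarr[OF W(1) w] .
  have "x \<ominus> w \<in> W" using quotient_eq_iff_same_a_r_cos[OF I x wc] assms(6) W(2) by blast
  hence "(x \<ominus> w) \<oplus> w \<in> W" using ideal_add[OF W(1) _ w] by blast
  moreover have "(x \<ominus> w) \<oplus> w = x" using x wc by algebra
  ultimately show ?thesis by simp
qed

lemma FactRing_vimage_ideal:
  assumes I: "ideal I R" and J: "ideal J (R Quot I)"
  shows "ideal {r \<in> carrier R. I +> r \<in> J} R"
  using ring_hom_ring.ideal_vimage[OF ideal.rcos_ring_hom_ring[OF I] J] .

lemma FactRing_image_vimage:
  assumes "J \<subseteq> carrier (R Quot I)"
  shows "(+>) I ` {r \<in> carrier R. I +> r \<in> J} = J"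
  using assms unfolding carrier_FactRing by blast

lemma FactRing_genideal_image:
  assumes I: "ideal I R" and G: "G \<subseteq> carrier R"
  shows "Idl\<^bsub>R Quot I\<^esub> ((+>) I ` G) = (+>) I ` (Idl G)"
proof
  interpret Q: ring "R Quot I" using ideal.quotient_is_ring[OF I] .
  have GI: "(+>) I ` G \<subseteq> (+>) I ` (Idl G)" using genideal_self[OF G] by blast
  show "Idl\<^bsub>R Quot I\<^esub> ((+>) I ` G) \<subseteq> (+>) I ` (Idl G)"
    using Q.genideal_minimal[OF ring_ideal_imp_quot_ideal[OF I genideal_ideal[OF G]] GI] .
  have GQ: "(+>) I ` G \<subseteq> carrier (R Quot I)" using G unfolding carrier_FactRing by blast
  let ?U = "{r \<in> carrier R. I +> r \<in> Idl\<^bsub>R Quot I\<^esub> ((+>) I ` G)}"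
  have "G \<subseteq> ?U" using G Q.genideal_self[OF GQ] by blast
  hence "Idl G \<subseteq> ?U" using genideal_minimal[OF FactRing_vimage_ideal[OF I Q.genideal_ideal[OF GQ]]] by blast
  thus "(+>) I ` (Idl G) \<subseteq> Idl\<^bsub>R Quot I\<^esub> ((+>) I ` G)" by blast
qed

lemma prime_chain_FactRing_vimage:
  assumes I: "ideal I R" and P: "prime_chain (R Quot I) n P"
  shows "prime_chain R n (\<lambda>i. {r \<in> carrier R. I +> r \<in> P i})"
    and "I \<subseteq> {r \<in> carrier R. I +> r \<in> P 0}"
proof -
  have Pp: "primeideal (P i) (R Quot I)" if "i \<le> n" for i using P that unfolding prime_chain_def by blast
  have Pi: "ideal (P i) (R Quot I)" if "i \<le> n" for i using primeideal.axioms(1)[OF Pp[OF that]] .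
  have img: "(+>) I ` {r \<in> carrier R. I +> r \<in> P i} = P i" if "i \<le> n" for i
    using FactRing_image_vimage additive_subgroup.a_subset[OF ideal.axioms(1)[OF Pi[OF that]]] .
  show "prime_chain R n (\<lambda>i. {r \<in> carrier R. I +> r \<in> P i})"
    unfolding prime_chain_def
  proof (intro conjI allI impI)
    fix i assume "i \<le> n"
    thus "primeideal {r \<in> carrier R. I +> r \<in> P i} R"
      using ring_hom_ring.primeideal_vimage[OF ideal.rcos_ring_hom_ring[OF I] is_cring Pp] by blast
  next
    fix i assume i: "i < n"
    have lt: "P i \<subset> P (Suc i)" using P i unfolding prime_chain_def by blast
    show "{r \<in> carrier R. I +> r \<in> P i} \<subset> {r \<in> carrier R. I +> r \<in> P (Suc i)}"
    proof (rule psubsetI)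
      show "{r \<in> carrier R. I +> r \<in> P i} \<subseteq> {r \<in> carrier R. I +> r \<in> P (Suc i)}"
        using lt by auto
      show "{r \<in> carrier R. I +> r \<in> P i} \<noteq> {r \<in> carrier R. I +> r \<in> P (Suc i)}"
      proof
        assume eq: "{r \<in> carrier R. I +> r \<in> P i} = {r \<in> carrier R. I +> r \<in> P (Suc i)}"
        have "P i = (+>) I ` {r \<in> carrier R. I +> r \<in> P i}" using img[of i] i by simp
        also have "\<dots> = P (Suc i)" unfolding eq using img[of "Suc i"] i by simp
        finally show False using lt by blast
      qed
    qed
  qed
  have "\<zero>\<^bsub>R Quot I\<^esub> \<in> P 0" using additive_subgroup.zero_closed[OF ideal.axioms(1)[OF Pi[of 0]]] by simp
  hence "I \<in> P 0" by (simp add: FactRing_def)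
  thus "I \<subseteq> {r \<in> carrier R. I +> r \<in> P 0}"
    using a_rcos_zero[OF I] ideal_subset_carrier[OF I] by auto
qed

lemma krull_dim_FactRing_le:
  assumes "ideal I R"
  shows "krull_dim (R Quot I) \<le> krull_dim R"
  unfolding krull_dim_eq_Sup_prime_chain
proof (rule Sup_subset_mono, rule subsetI)
  fix x assume "x \<in> {enat n |n. \<exists>C. prime_chain (R Quot I) n C}"
  then obtain n C where "x = enat n" "prime_chain (R Quot I) n C" by blast
  thus "x \<in> {enat n |n. \<exists>C. prime_chain R n C}"
    using prime_chain_FactRing_vimage(1)[OF assms] by blast
qed

end

lemma (in noetherian_cring) FactRing_max_ideal:
  assumes I: "ideal I R" and m: "maximalideal m R" "\<And>M. maximalideal M R \<Longrightarrow> M = m" and "I \<subseteq> m"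
  shows "maximalideal ((+>) I ` m) (R Quot I)" and "max_ideal (R Quot I) = (+>) I ` m"
proof -
  have mi: "ideal m R" using maximalideal.axioms(1)[OF m(1)] .
  have mbar: "ideal ((+>) I ` m) (R Quot I)" using ring_ideal_imp_quot_ideal[OF I mi] .
  have unique: "U = m" if "ideal U R" "m \<subseteq> U" "U \<noteq> carrier R" for U
    using ideal_subset_unique_maximalideal[OF m(2) that(1,3)] that(2) by blast
  have one: "I +> \<one> \<notin> (+>) I ` m"
  proof
    assume "I +> \<one> \<in> (+>) I ` m"
    then obtain w where "w \<in> m" "I +> \<one> = I +> w" by blast
    hence "\<one> \<in> m" using a_r_coset_eq_imp_mem[OF I mi assms(4) one_closed] by blast
    thus False using maximalideal.I_notcarr[OF m(1)] ideal.one_imp_carrier[OF mi] by blast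
  qed
  show max: "maximalideal ((+>) I ` m) (R Quot I)"
  proof (rule maximalidealI[OF mbar])
    show "carrier (R Quot I) \<noteq> (+>) I ` m" using one one_closed unfolding carrier_FactRing by blast
    fix J assume J: "ideal J (R Quot I)" "(+>) I ` m \<subseteq> J" "J \<subseteq> carrier (R Quot I)"
    define U where "U = {r \<in> carrier R. I +> r \<in> J}"
    have U: "ideal U R" and JU: "J = (+>) I ` U"
      unfolding U_def using FactRing_vimage_ideal[OF I J(1)] FactRing_image_vimage[OF J(3)] by auto
    have "m \<subseteq> U" unfolding U_def using J(2) ideal_subset_carrier[OF mi] by blast
    thus "J = (+>) I ` m \<or> J = carrier (R Quot I)"
      using unique[OF U] JU carrier_FactRing by (cases "U = carrier R") auto
  qed
  have "M = (+>) I ` m" if M: "maximalideal M (R Quot I)" for M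
  proof -
    have Mi: "ideal M (R Quot I)" using maximalideal.axioms(1)[OF M] .
    have Mc: "M \<subseteq> carrier (R Quot I)"
      using Mi ideal.axioms(1) additive_subgroup.a_subset by blast
    define U where "U = {r \<in> carrier R. I +> r \<in> M}"
    have U: "ideal U R" using FactRing_vimage_ideal[OF I Mi] unfolding U_def .
    have "U \<noteq> carrier R"
    proof
      assume "U = carrier R"
      hence "I +> \<one> \<in> M" using one_closed unfolding U_def by blast
      hence "M = carrier (R Quot I)" using ideal.one_imp_carrier[OF Mi] by (simp add: FactRing_def)
      thus False using maximalideal.I_notcarr[OF M] by simp
    qed
    hence "M \<subseteq> (+>) I ` m"
      using ideal_subset_unique_maximalideal[OF m(2) U] FactRing_image_vimage[OF Mc] unfolding U_def by blast
    hence "(+>) I ` m = M \<or> (+>) I ` m = carrier (R Quot I)"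
      using maximalideal.I_maximal[OF M mbar] additive_subgroup.a_subset[OF ideal.axioms(1)[OF mbar]]
      by blast
    thus ?thesis using one one_closed unfolding carrier_FactRing by blast
  qed
  thus "max_ideal (R Quot I) = (+>) I ` m" unfolding max_ideal_def using max by (intro the_equality)
qed

lemma noeth_local_ring_FactRing_krull_dim:
  assumes R: "noeth_local_ring R" and I: "ideal I R" "I \<subseteq> max_ideal R"
  obtains d C where "krull_dim (R Quot I) = enat d" "prime_chain (R Quot I) d C"
proof -
  interpret noetherian_cring R using noeth_local_ring_noetherian_cring[OF R] .
  obtain dR where "krull_dim R = enat dR" using noeth_local_ring_krull_dim[OF R] by blast
  then obtain d where d: "krull_dim (R Quot I) = enat d"
    using krull_dim_FactRing_le[OF I(1)] by (metis enat_ile)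
  have "maximalideal ((+>\<^bsub>R\<^esub>) I ` max_ideal R) (R Quot I)"
    using FactRing_max_ideal(1)[OF I(1) _ _ I(2)] local_ring_max_ideal R
    unfolding noeth_local_ring_def by blast
  hence "primeideal ((+>\<^bsub>R\<^esub>) I ` max_ideal R) (R Quot I)"
    using cring.maximalideal_prime[OF ideal.quotient_is_cring[OF I(1) is_cring]] by blast
  thus thesis using that krull_dim_attained[OF d] d by blast
qed

section \<open>Going-down and the dimension inequality\<close>

text \<open>Going-down is applied downwards from the top of the chain: the prime over \<open>p i\<close> is chosen
  inside the prime already chosen over \<open>p (Suc i)\<close>.\<close>

lemma going_down_lift_prime_chain:
  assumes gd: "going_down A B f" and p: "prime_chain A r p" and Q: "primeideal Q B"
    and Qc: "{a \<in> carrier A. f a \<in> Q} = p r"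
  obtains C where "prime_chain B r C" "C r = Q" "\<And>i. i \<le> r \<Longrightarrow> {a \<in> carrier A. f a \<in> C i} = p i"
proof -
  define L where "L = rec_nat Q (\<lambda>j P. SOME P'. primeideal P' B \<and> P' \<subseteq> P \<and> {a \<in> carrier A. f a \<in> P'} = p (r - Suc j))"
  have L0: "L 0 = Q" unfolding L_def by simp
  have LS: "L (Suc j) = (SOME P'. primeideal P' B \<and> P' \<subseteq> L j \<and> {a \<in> carrier A. f a \<in> P'} = p (r - Suc j))" for j
    unfolding L_def by simp
  have pp: "\<forall>i\<le>r. primeideal (p i) A" and pc: "\<forall>i<r. p i \<subset> p (Suc i)" using p unfolding prime_chain_def by auto
  have L: "primeideal (L j) B \<and> {a \<in> carrier A. f a \<in> L j} = p (r - j) \<and> (j > 0 \<longrightarrow> L j \<subseteq> L (j - 1))"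
    if "j \<le> r" for j
    using that
  proof (induct j)
    case 0 thus ?case using L0 Q Qc by simp
  next
    case (Suc j)
    have IH: "primeideal (L j) B" "{a \<in> carrier A. f a \<in> L j} = p (r - j)" using Suc by auto
    have "p (r - Suc j) \<subset> p (Suc (r - Suc j))" using pc Suc(2) by simp
    hence "p (r - Suc j) \<subseteq> p (r - j)" using Suc(2) by (simp add: Suc_diff_Suc)
    hence "\<exists>P'. primeideal P' B \<and> P' \<subseteq> L j \<and> {a \<in> carrier A. f a \<in> P'} = p (r - Suc j)"
      using gd IH pp unfolding going_down_def by (meson diff_le_self)
    hence "primeideal (L (Suc j)) B \<and> L (Suc j) \<subseteq> L j \<and> {a \<in> carrier A. f a \<in> L (Suc j)} = p (r - Suc j)"
      unfolding LS by (rule someI_ex)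
    thus ?case by simp
  qed
  define C where "C i = L (r - i)" for i
  have "prime_chain B r C"
    unfolding prime_chain_def
  proof (intro conjI allI impI)
    fix i assume "i \<le> r" thus "primeideal (C i) B" unfolding C_def using L by simp
  next
    fix i assume i: "i < r"
    have e: "r - i = Suc (r - Suc i)" using i by simp
    have "L (r - i) \<subseteq> L (r - Suc i)" using L[of "r - i"] e by simp
    moreover have "{a \<in> carrier A. f a \<in> L (r - i)} = p i" using L[of "r - i"] i by simp
    moreover have "{a \<in> carrier A. f a \<in> L (r - Suc i)} = p (Suc i)" using L[of "r - Suc i"] i by simp
    moreover have "p i \<noteq> p (Suc i)" using pc i by blast
    ultimately show "C i \<subset> C (Suc i)" unfolding C_def by blast
  qed
  moreover have "C r = Q" unfolding C_def using L0 by simp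
  moreover have "{a \<in> carrier A. f a \<in> C i} = p i" if "i \<le> r" for i unfolding C_def using L that by simp
  ultimately show thesis using that by blast
qed

lemma prime_chain_append:
  assumes C: "prime_chain R a C" and D: "prime_chain R b D" and "C a = D 0"
  shows "prime_chain R (a + b) (\<lambda>i. if i \<le> a then C i else D (i - a))"
  unfolding prime_chain_def
proof (intro conjI allI impI)
  fix i assume "i \<le> a + b"
  thus "primeideal (if i \<le> a then C i else D (i - a)) R" using C D unfolding prime_chain_def by auto
next
  fix i assume i: "i < a + b"
  consider "Suc i \<le> a" | "i = a" | "a < i" by linarith
  thus "(if i \<le> a then C i else D (i - a)) \<subset> (if Suc i \<le> a then C (Suc i) else D (Suc i - a))"
  proof cases
    case 1 thus ?thesis using C unfolding prime_chain_def by auto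
  next
    case 2 thus ?thesis using D i assms(3) unfolding prime_chain_def by auto
  next
    case 3
    hence "Suc i - a = Suc (i - a)" "i - a < b" using i by auto
    thus ?thesis using D 3 unfolding prime_chain_def by auto
  qed
qed

lemma local_hom_ext_ideal:
  assumes "noeth_local_ring A" "noeth_local_ring B" "local_hom A B f"
  shows "ideal (ext_ideal A B f (max_ideal A)) B" "ext_ideal A B f (max_ideal A) \<subseteq> max_ideal B"
    and "f ` max_ideal A \<subseteq> ext_ideal A B f (max_ideal A)"
proof -
  interpret B: noetherian_cring B using noeth_local_ring_noetherian_cring[OF assms(2)] .
  have nB: "ideal (max_ideal B) B"
    using local_ring_max_ideal(1) maximalideal.axioms(1) assms(2) unfolding noeth_local_ring_def by blast
  have fm: "f ` max_ideal A \<subseteq> max_ideal B" using assms(3) unfolding local_hom_def by blast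
  hence fmc: "f ` max_ideal A \<subseteq> carrier B" using B.ideal_subset_carrier[OF nB] by blast
  show "ideal (ext_ideal A B f (max_ideal A)) B" "ext_ideal A B f (max_ideal A) \<subseteq> max_ideal B"
    "f ` max_ideal A \<subseteq> ext_ideal A B f (max_ideal A)"
    unfolding ext_ideal_def using B.genideal_ideal[OF fmc] B.genideal_minimal[OF nB fm] B.genideal_self[OF fmc]
    by auto
qed

lemma local_hom_contract_eq_max_ideal:
  assumes "noeth_local_ring A" "noeth_local_ring B" "local_hom A B f"
    and Q: "primeideal Q B" "ext_ideal A B f (max_ideal A) \<subseteq> Q"
  shows "{a \<in> carrier A. f a \<in> Q} = max_ideal A"
proof -
  interpret A: noetherian_cring A using noeth_local_ring_noetherian_cring[OF assms(1)] .
  interpret B: noetherian_cring B using noeth_local_ring_noetherian_cring[OF assms(2)] .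
  have mA: "maximalideal (max_ideal A) A"
    using local_ring_max_ideal(1) assms(1) unfolding noeth_local_ring_def by blast
  have "f \<in> ring_hom A B" using assms(3) unfolding local_hom_def by blast
  hence "primeideal {a \<in> carrier A. f a \<in> Q} A"
    using ring_hom_ring.primeideal_vimage[OF ring_hom_ringI2[OF A.ring_axioms B.ring_axioms] A.is_cring Q(1)]
    by blast
  moreover have "max_ideal A \<subseteq> {a \<in> carrier A. f a \<in> Q}"
    using local_hom_ext_ideal(3)[OF assms(1-3)] Q(2) A.ideal_subset_carrier[OF maximalideal.axioms(1)[OF mA]]
    by blast
  ultimately show ?thesis
    using maximalideal.I_maximal[OF mA primeideal.axioms(1)] primeideal.I_notcarr
      A.ideal_subset_carrier[OF primeideal.axioms(1)] by metis
qed

lemma going_down_prime_chain_add: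
  assumes "noeth_local_ring A" "noeth_local_ring B" "local_hom A B f" "going_down A B f"
    and p: "prime_chain A a p" and P: "prime_chain (B Quot ext_ideal A B f (max_ideal A)) b P"
  shows "\<exists>C. prime_chain B (a + b) C"
proof -
  interpret A: noetherian_cring A using noeth_local_ring_noetherian_cring[OF assms(1)] .
  interpret B: noetherian_cring B using noeth_local_ring_noetherian_cring[OF assms(2)] .
  define I where "I = ext_ideal A B f (max_ideal A)"
  have I: "ideal I B" unfolding I_def using local_hom_ext_ideal[OF assms(1-3)] by blast
  define D where "D i = {r \<in> carrier B. I +>\<^bsub>B\<^esub> r \<in> P i}" for i
  have D: "prime_chain B b D" unfolding D_def by (rule B.prime_chain_FactRing_vimage(1)[OF I P[folded I_def]])
  have ID: "I \<subseteq> D 0" unfolding D_def by (rule B.prime_chain_FactRing_vimage(2)[OF I P[folded I_def]])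
  have D0: "primeideal (D 0) B" using D unfolding prime_chain_def by simp
  have mA: "maximalideal (max_ideal A) A" "\<And>M. maximalideal M A \<Longrightarrow> M = max_ideal A"
    using local_ring_max_ideal assms(1) unfolding noeth_local_ring_def by auto
  have pa: "primeideal (p a) A" using p unfolding prime_chain_def by simp
  hence "p a \<subseteq> max_ideal A"
    using A.ideal_subset_unique_maximalideal[OF mA(2) primeideal.axioms(1)[OF pa]] primeideal.I_notcarr[OF pa]
    by auto
  hence p': "prime_chain A a (p(a := max_ideal A))"
    by (rule prime_chain_update_last[OF p A.maximalideal_prime[OF mA(1)]])
  have "{x \<in> carrier A. f x \<in> D 0} = (p(a := max_ideal A)) a"
    using local_hom_contract_eq_max_ideal[OF assms(1-3) D0] ID unfolding I_def by simp
  then obtain C where C: "prime_chain B a C" "C a = D 0"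
    by (rule going_down_lift_prime_chain[OF assms(4) p' D0])
  show ?thesis using prime_chain_append[OF C(1) D C(2)] by blast
qed

section \<open>Embedding dimension\<close>

lemma edim_le_card:
  assumes "finite S" "S \<subseteq> max_ideal R"
    and "Idl\<^bsub>R\<^esub> (S \<union> max_ideal R \<cdot>\<^bsub>R\<^esub> max_ideal R) = max_ideal R"
  shows "edim R \<le> card S"
  unfolding edim_def by (rule Least_le) (use assms in blast)

context cring
begin

lemma edim_attained:
  assumes m: "ideal (max_ideal R) R" and G: "finite G" "G \<subseteq> carrier R" "max_ideal R = Idl G"
  obtains S where "finite S" "card S = edim R" "S \<subseteq> max_ideal R"
    "Idl (S \<union> max_ideal R \<cdot> max_ideal R) = max_ideal R"
proof -
  have Gm: "G \<subseteq> max_ideal R" using genideal_self[OF G(2)] G(3) by simp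
  have mm: "max_ideal R \<cdot> max_ideal R \<subseteq> max_ideal R" using ideal_prod_inter[OF m m] by blast
  have "G \<union> max_ideal R \<cdot> max_ideal R \<subseteq> carrier R" using G(2) mm ideal_subset_carrier[OF m] by blast
  hence "max_ideal R \<subseteq> Idl (G \<union> max_ideal R \<cdot> max_ideal R)"
    using subset_Idl_subset[OF _ Un_upper1] G(3) by simp
  moreover have "Idl (G \<union> max_ideal R \<cdot> max_ideal R) \<subseteq> max_ideal R"
    by (rule genideal_minimal[OF m]) (use Gm mm in blast)
  ultimately have "\<exists>n S. finite S \<and> card S = n \<and> S \<subseteq> max_ideal R \<and>
      Idl (S \<union> max_ideal R \<cdot> max_ideal R) = max_ideal R"
    using G(1) Gm by blast
  hence "\<exists>S. finite S \<and> card S = edim R \<and> S \<subseteq> max_ideal R \<and>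
      Idl (S \<union> max_ideal R \<cdot> max_ideal R) = max_ideal R"
    unfolding edim_def by (rule LeastI_ex)
  thus thesis using that by blast
qed

lemma FactRing_ideal_prod_image:
  assumes I: "ideal I R" and J: "ideal J R" and K: "ideal K R"
  shows "((+>) I ` J) \<cdot>\<^bsub>R Quot I\<^esub> ((+>) I ` K) \<subseteq> (+>) I ` (J \<cdot> K)"
proof -
  interpret Q: cring "R Quot I" using ideal.quotient_is_cring[OF I is_cring] .
  show ?thesis
  proof (rule Q.ideal_prod_least[OF ring_ideal_imp_quot_ideal[OF I ideal_prod_is_ideal[OF J K]]])
    fix X Y assume "X \<in> (+>) I ` J" "Y \<in> (+>) I ` K"
    then obtain x y where xy: "x \<in> J" "y \<in> K" "X = I +> x" "Y = I +> y" by blast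
    have "X \<otimes>\<^bsub>R Quot I\<^esub> Y = I +> (x \<otimes> y)"
      using ideal.rcoset_mult_add[OF I ideal.Icarr[OF J xy(1)] ideal.Icarr[OF K xy(2)]] xy(3,4)
      by (simp add: FactRing_def)
    thus "X \<otimes>\<^bsub>R Quot I\<^esub> Y \<in> (+>) I ` (J \<cdot> K)" using ideal_prod.prod[where R=R, OF xy(1,2)] by blast
  qed
qed

lemma ring_hom_image_subset_if_spans:
  assumes f: "ring_hom_ring R B f" and m: "ideal m R" and S: "S \<subseteq> m" "Idl (S \<union> m \<cdot> m) = m"
    and W: "ideal W B" "f ` S \<subseteq> W" and n: "f ` m \<subseteq> n" "n \<cdot>\<^bsub>B\<^esub> n \<subseteq> W"
  shows "f ` m \<subseteq> W"
proof -
  define V where "V = {a \<in> carrier R. f a \<in> W}"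
  have V: "ideal V R" unfolding V_def using ring_hom_ring.ideal_vimage[OF f W(1)] .
  have "S \<subseteq> V" unfolding V_def using S(1) W(2) ideal_subset_carrier[OF m] by blast
  moreover have "m \<cdot> m \<subseteq> V"
  proof (rule ideal_prod_least[OF V])
    fix a b assume a: "a \<in> m" and b: "b \<in> m"
    have "f (a \<otimes> b) = f a \<otimes>\<^bsub>B\<^esub> f b"
      using ring_hom_mult[OF ring_hom_ring.homh[OF f] ideal.Icarr[OF m a] ideal.Icarr[OF m b]] .
    also have "\<dots> \<in> W" using ideal_prod.prod[of "f a" n "f b" n B] a b n by blast
    finally show "a \<otimes> b \<in> V" unfolding V_def using ideal.Icarr[OF m a] ideal.Icarr[OF m b] by simp
  qed
  ultimately have "m \<subseteq> V" using genideal_minimal[OF V] S(2) by blast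
  thus ?thesis unfolding V_def by blast
qed

end

lemma (in noetherian_cring) FactRing_edim_attained:
  assumes I: "ideal I R" and m: "maximalideal m R" "\<And>M. maximalideal M R \<Longrightarrow> M = m" and "I \<subseteq> m"
  obtains S where "finite S" "card S = edim (R Quot I)" "S \<subseteq> (+>) I ` m"
    "Idl\<^bsub>R Quot I\<^esub> (S \<union> ((+>) I ` m) \<cdot>\<^bsub>R Quot I\<^esub> ((+>) I ` m)) = (+>) I ` m"
proof -
  interpret F: cring "R Quot I" using ideal.quotient_is_cring[OF I is_cring] .
  have max_F: "max_ideal (R Quot I) = (+>) I ` m" and F_m: "ideal ((+>) I ` m) (R Quot I)"
    using FactRing_max_ideal[OF I m assms(4)] maximalideal.axioms(1) by auto
  obtain G where G: "G \<subseteq> carrier R" "finite G" "m = Idl G"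
    using finetely_gen[OF maximalideal.axioms(1)[OF m(1)]] by blast
  have "max_ideal (R Quot I) = Idl\<^bsub>R Quot I\<^esub> ((+>) I ` G)"
    using max_F FactRing_genideal_image[OF I G(1)] G(3) by simp
  moreover have "(+>) I ` G \<subseteq> carrier (R Quot I)" using G(1) carrier_FactRing by blast
  ultimately show thesis
    using F.edim_attained[OF F_m[folded max_F] finite_imageI[OF G(2)]] that unfolding max_F by blast
qed

lemma (in cring) FactRing_spanning_set_lift:
  assumes I: "ideal I R" and n: "ideal n R" and W: "ideal W R" "I \<subseteq> W" "n \<cdot> n \<subseteq> W"
    and S: "S \<subseteq> (+>) I ` W"
    and span: "Idl\<^bsub>R Quot I\<^esub> (S \<union> ((+>) I ` n) \<cdot>\<^bsub>R Quot I\<^esub> ((+>) I ` n)) = (+>) I ` n"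
  shows "n \<subseteq> W"
proof
  interpret F: cring "R Quot I" using ideal.quotient_is_cring[OF I is_cring] .
  have "(+>) I ` (n \<cdot> n) \<subseteq> (+>) I ` W" using W(3) by (rule image_mono)
  hence "((+>) I ` n) \<cdot>\<^bsub>R Quot I\<^esub> ((+>) I ` n) \<subseteq> (+>) I ` W"
    by (rule subset_trans[OF FactRing_ideal_prod_image[OF I n n]])
  with S have gens: "S \<union> ((+>) I ` n) \<cdot>\<^bsub>R Quot I\<^esub> ((+>) I ` n) \<subseteq> (+>) I ` W" by (rule Un_least)
  have nW: "(+>) I ` n \<subseteq> (+>) I ` W"
    using F.genideal_minimal[OF ring_ideal_imp_quot_ideal[OF I W(1)] gens] unfolding span .
  fix x assume x: "x \<in> n"
  then obtain w where "w \<in> W" "I +> x = I +> w" using nW by blast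
  thus "x \<in> W" using a_r_coset_eq_imp_mem[OF I W(1,2)] x ideal.Icarr[OF n x] by blast
qed

lemma edim_le_edim_add_edim_fibre:
  assumes A: "noeth_local_ring A" and B: "noeth_local_ring B" and f: "local_hom A B f"
  shows "edim B \<le> edim A + edim (B Quot ext_ideal A B f (max_ideal A))"
proof -
  interpret A: noetherian_cring A using noeth_local_ring_noetherian_cring[OF A] .
  interpret B: noetherian_cring B using noeth_local_ring_noetherian_cring[OF B] .
  define I where "I = ext_ideal A B f (max_ideal A)"
  define mA where "mA = max_ideal A"
  define nB where "nB = max_ideal B"
  have mA: "ideal mA A"
    using maximalideal.axioms(1)[OF local_ring_max_ideal(1)] A unfolding noeth_local_ring_def mA_def by blast
  have nB: "maximalideal nB B" "\<And>M. maximalideal M B \<Longrightarrow> M = nB"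
    using local_ring_max_ideal B unfolding noeth_local_ring_def nB_def by auto
  have nBi: "ideal nB B" using maximalideal.axioms(1)[OF nB(1)] .
  have I: "ideal I B" "I \<subseteq> nB"
    using local_hom_ext_ideal(1,2)[OF A B f] unfolding I_def nB_def by auto
  have fm: "f ` mA \<subseteq> nB" and fh: "ring_hom_ring A B f"
    using f ring_hom_ringI2[OF A.ring_axioms B.ring_axioms] unfolding local_hom_def mA_def nB_def by auto
  obtain GA where GA: "GA \<subseteq> carrier A" "finite GA" "mA = Idl\<^bsub>A\<^esub> GA" using A.finetely_gen[OF mA] by blast
  obtain SA where SA: "finite SA" "card SA = edim A" "SA \<subseteq> mA" "Idl\<^bsub>A\<^esub> (SA \<union> mA \<cdot>\<^bsub>A\<^esub> mA) = mA"
    using A.edim_attained[OF mA[unfolded mA_def] GA(2,1) GA(3)[unfolded mA_def]] unfolding mA_def by blast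
  obtain SF where SF: "finite SF" "card SF = edim (B Quot I)" "SF \<subseteq> (+>\<^bsub>B\<^esub>) I ` nB"
    "Idl\<^bsub>B Quot I\<^esub> (SF \<union> ((+>\<^bsub>B\<^esub>) I ` nB) \<cdot>\<^bsub>B Quot I\<^esub> ((+>\<^bsub>B\<^esub>) I ` nB)) = (+>\<^bsub>B\<^esub>) I ` nB"
    using B.FactRing_edim_attained[OF I(1) nB I(2)] .
  have "\<forall>X\<in>SF. \<exists>r. r \<in> nB \<and> X = I +>\<^bsub>B\<^esub> r" using SF(3) by blast
  from bchoice[OF this] obtain rep where rep: "\<forall>X\<in>SF. rep X \<in> nB \<and> X = I +>\<^bsub>B\<^esub> rep X" by blast
  define SB where "SB = f ` SA \<union> rep ` SF"
  define W where "W = Idl\<^bsub>B\<^esub> (SB \<union> nB \<cdot>\<^bsub>B\<^esub> nB)"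
  have SB: "SB \<subseteq> nB" "finite SB" unfolding SB_def using SA(1,3) SF(1) fm rep by auto
  have SBc: "SB \<union> nB \<cdot>\<^bsub>B\<^esub> nB \<subseteq> carrier B"
    using SB B.ideal_prod_inter[OF nBi nBi] B.ideal_subset_carrier[OF nBi] by blast
  have W: "ideal W B" and SBW: "SB \<union> nB \<cdot>\<^bsub>B\<^esub> nB \<subseteq> W"
    unfolding W_def using B.genideal_ideal[OF SBc] B.genideal_self[OF SBc] by auto
  have fSA: "f ` SA \<subseteq> W" and nn: "nB \<cdot>\<^bsub>B\<^esub> nB \<subseteq> W" using SBW unfolding SB_def by auto
  have "f ` mA \<subseteq> W" using A.ring_hom_image_subset_if_spans[OF fh mA SA(3,4) W fSA fm nn] .
  hence IW: "I \<subseteq> W" using B.genideal_minimal[OF W] unfolding I_def ext_ideal_def mA_def by blast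
  have SF_W: "SF \<subseteq> (+>\<^bsub>B\<^esub>) I ` W"
  proof
    fix X assume X: "X \<in> SF"
    hence "rep X \<in> W" using SBW unfolding SB_def by blast
    thus "X \<in> (+>\<^bsub>B\<^esub>) I ` W" using rep X by (intro image_eqI[of X _ "rep X"]) auto
  qed
  have "nB \<subseteq> W" using B.FactRing_spanning_set_lift[OF I(1) nBi W IW nn SF_W SF(4)] .
  moreover have "W \<subseteq> nB"
    unfolding W_def using B.genideal_minimal[OF nBi] SB(1) B.ideal_prod_inter[OF nBi nBi] by blast
  ultimately have "edim B \<le> card SB" using edim_le_card[of SB B] SB unfolding W_def nB_def by blast
  also have "\<dots> \<le> card SA + card SF"
    unfolding SB_def
    by (rule order_trans[OF card_Un_le add_mono[OF card_image_le[OF SA(1)] card_image_le[OF SF(1)]]])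
  finally show ?thesis using SA(2) SF(2) unfolding I_def by simp
qed

theorem corollary2p4:
  fixes A :: "('a, 'c) ring_scheme" and B :: "('b, 'd) ring_scheme" and f :: "'a \<Rightarrow> 'b"
  assumes "noeth_local_ring A" and "noeth_local_ring B"
    and "local_hom A B f" and "going_down A B f"
  shows "cdim B \<le> cdim A + cdim (B Quot (ext_ideal A B f (max_ideal A))) \<and>
         (regular_local_ring (B Quot (ext_ideal A B f (max_ideal A))) \<longrightarrow> cdim B \<le> cdim A)"
proof -
  define F where "F = B Quot (ext_ideal A B f (max_ideal A))"
  obtain dA pA where dA: "krull_dim A = enat dA" "prime_chain A dA pA"
    using noeth_local_ring_krull_dim[OF assms(1)] .
  obtain dB where dB: "krull_dim B = enat dB" using noeth_local_ring_krull_dim[OF assms(2)] by blast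
  obtain dF PF where dF: "krull_dim F = enat dF" "prime_chain F dF PF"
    using noeth_local_ring_FactRing_krull_dim[OF assms(2) local_hom_ext_ideal(1,2)[OF assms(1-3)]]
    unfolding F_def .
  have "enat (dA + dF) \<le> krull_dim B"
    using going_down_prime_chain_add[OF assms dA(2) dF(2)[unfolded F_def]] prime_chain_le_krull_dim by blast
  moreover have "edim B \<le> edim A + edim F"
    unfolding F_def by (rule edim_le_edim_add_edim_fibre[OF assms(1-3)])
  ultimately have "cdim B \<le> cdim A + cdim F" unfolding cdim_def dA(1) dB dF(1) by simp
  moreover have "cdim F = 0" if "regular_local_ring F"
    using that dF(1) unfolding regular_local_ring_def cdim_def by simp
  ultimately show ?thesis unfolding F_def by auto
qed

end
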